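(* Let $X$ be a proper complete CAT(0) space with $\partial X$ homeomorphic to the join $C_1 * C_2$ of two Cantor sets, and let $G<\mathrm{Isom}(X)$ act geometrically on $X$. Then either $G$ or a subgroup of $G$ of index $2$ stabilizes each of $C_1$ and $C_2$ (for its induced action on $\partial X$).
   Context: $C_1, C_2$ are identified with their images in $\partial X$ under the homeomorphism $\partial X\cong C_1*C_2$. Each isometry $g$ of $X$ extends to a homeomorphism $\bar g$ of $\partial X$ (cone topology). A geometric action is proper and cocompact by isometries. *)

theory Defs
  imports "HOL-Analysis.Analysis"
begin

definition proper_metric_space :: "'a::metric_space itself \<Rightarrow> bool" where
  "proper_metric_space _ \<longleftrightarrow> (\<forall>(x::'a) r. compact (cball x r))"

text \<open>A geodesic from x to y: an isometric map of [0, dist x y] into the space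
  (values outside the interval are irrelevant).\<close>
definition geodesic :: "(real \<Rightarrow> 'a::metric_space) \<Rightarrow> 'a \<Rightarrow> 'a \<Rightarrow> bool" where
  "geodesic g x y \<longleftrightarrow> g 0 = x \<and> g (dist x y) = y \<and>
     (\<forall>s\<in>{0..dist x y}. \<forall>t\<in>{0..dist x y}. dist (g s) (g t) = \<bar>s - t\<bar>)"

definition geodesic_space :: "'a::metric_space itself \<Rightarrow> bool" where
  "geodesic_space _ \<longleftrightarrow> (\<forall>x y::'a. \<exists>g. geodesic g x y)"

definition triangle_pairs ::
  "(real \<Rightarrow> 'a::metric_space) \<Rightarrow> 'a \<Rightarrow> 'a \<Rightarrow> complex \<Rightarrow> complex \<Rightarrow> ('a \<times> complex) set" where
  "triangle_pairs g x y x' y' =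
     {(g t, x' + of_real (t / dist x y) * (y' - x')) | t. t \<in> {0..dist x y}}"

definition CAT0_space :: "'a::metric_space itself \<Rightarrow> bool" where
  "CAT0_space T \<longleftrightarrow> geodesic_space T \<and>
     (\<forall>(x::'a) y z g1 g2 g3 x' y' z'.
        geodesic g1 x y \<and> geodesic g2 y z \<and> geodesic g3 z x \<and>
        dist x' y' = dist x y \<and> dist y' z' = dist y z \<and> dist z' x' = dist z x \<longrightarrow>
        (let P = triangle_pairs g1 x y x' y' \<union> triangle_pairs g2 y z y' z'
                 \<union> triangle_pairs g3 z x z' x'
         in \<forall>(p, p')\<in>P. \<forall>(q, q')\<in>P. dist p q \<le> dist p' q'))"

definition geodesic_ray :: "(real \<Rightarrow> 'a::metric_space) \<Rightarrow> bool" where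
  "geodesic_ray c \<longleftrightarrow> (\<forall>s\<ge>0. \<forall>t\<ge>0. dist (c s) (c t) = \<bar>s - t\<bar>)"

definition asymptotic :: "(real \<Rightarrow> 'a::metric_space) \<Rightarrow> (real \<Rightarrow> 'a) \<Rightarrow> bool" where
  "asymptotic c c' \<longleftrightarrow> (\<exists>K. \<forall>t\<ge>0. dist (c t) (c' t) \<le> K)"

definition ray_class :: "(real \<Rightarrow> 'a::metric_space) \<Rightarrow> (real \<Rightarrow> 'a) set" where
  "ray_class c = {c'. geodesic_ray c' \<and> asymptotic c c'}"

definition visual_boundary :: "'a::metric_space itself \<Rightarrow> (real \<Rightarrow> 'a) set set" where
  "visual_boundary _ = {ray_class c | c. geodesic_ray (c :: real \<Rightarrow> 'a)}"

definition cone_nbhd :: "'a::metric_space \<Rightarrow> (real \<Rightarrow> 'a) set \<Rightarrow> real \<Rightarrow> real \<Rightarrow> (real \<Rightarrow> 'a) set set" where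
  "cone_nbhd x0 \<xi> r e = {\<eta> \<in> visual_boundary TYPE('a).
      \<exists>c\<in>\<xi>. \<exists>c'\<in>\<eta>. c 0 = x0 \<and> c' 0 = x0 \<and> dist (c r) (c' r) < e}"

definition cone_topology :: "'a::metric_space \<Rightarrow> (real \<Rightarrow> 'a) set topology" where
  "cone_topology x0 = topology_generated_by
     {cone_nbhd x0 \<xi> r e | \<xi> r e. \<xi> \<in> visual_boundary TYPE('a) \<and> r > 0 \<and> e > 0}"

definition isometry :: "('a::metric_space \<Rightarrow> 'a) \<Rightarrow> bool" where
  "isometry g \<longleftrightarrow> surj g \<and> (\<forall>x y. dist (g x) (g y) = dist x y)"

definition isometry_group :: "('a::metric_space \<Rightarrow> 'a) set \<Rightarrow> bool" where
  "isometry_group G \<longleftrightarrow> id \<in> G \<and> (\<forall>g\<in>G. isometry g) \<and>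
     (\<forall>g\<in>G. \<forall>h\<in>G. g \<circ> h \<in> G) \<and> (\<forall>g\<in>G. inv g \<in> G)"

definition is_subgroup :: "('a \<Rightarrow> 'a) set \<Rightarrow> ('a \<Rightarrow> 'a) set \<Rightarrow> bool" where
  "is_subgroup H G \<longleftrightarrow> H \<subseteq> G \<and> id \<in> H \<and>
     (\<forall>g\<in>H. \<forall>h\<in>H. g \<circ> h \<in> H) \<and> (\<forall>g\<in>H. inv g \<in> H)"

definition proper_action :: "('a::metric_space \<Rightarrow> 'a) set \<Rightarrow> bool" where
  "proper_action G \<longleftrightarrow> (\<forall>x. \<exists>r>0. finite {g\<in>G. g ` ball x r \<inter> ball x r \<noteq> {}})"

definition cocompact_action :: "('a::metric_space \<Rightarrow> 'a) set \<Rightarrow> bool" where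
  "cocompact_action G \<longleftrightarrow> (\<exists>K. compact K \<and> (\<Union>g\<in>G. g ` K) = UNIV)"

definition geometric_action :: "('a::metric_space \<Rightarrow> 'a) set \<Rightarrow> bool" where
  "geometric_action G \<longleftrightarrow> proper_action G \<and> cocompact_action G"

definition boundary_map :: "('a \<Rightarrow> 'a) \<Rightarrow> (real \<Rightarrow> 'a) set \<Rightarrow> (real \<Rightarrow> 'a) set" where
  "boundary_map g \<xi> = (\<lambda>c. g \<circ> c) ` \<xi>"

definition cantor_set :: "real set" where
  "cantor_set = (\<lambda>a::nat \<Rightarrow> bool. \<Sum>n. (if a n then 2 else 0) / 3 ^ Suc n) ` UNIV"

definition is_cantor_subspace :: "'b topology \<Rightarrow> 'b set \<Rightarrow> bool" where
  "is_cantor_subspace T C \<longleftrightarrow> C \<subseteq> topspace T \<and>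
     subtopology T C homeomorphic_space subtopology euclideanreal cantor_set"

text \<open>T is the join C1 * C2 with C1, C2 identified with their images: the map
  (a, b, t) to the point of T is a quotient map from C1 x C2 x [0,1] onto T realising
  exactly the join identifications, with (a,b,0) going to a and (a,b,1) going to b.\<close>
definition join_of :: "'b topology \<Rightarrow> 'b set \<Rightarrow> 'b set \<Rightarrow> bool" where
  "join_of T C1 C2 \<longleftrightarrow> C1 \<subseteq> topspace T \<and> C2 \<subseteq> topspace T \<and>
     (\<exists>q. quotient_map
            (prod_topology (subtopology T C1)
               (prod_topology (subtopology T C2) (top_of_set {0..1::real}))) T q \<and>
          (\<forall>a\<in>C1. \<forall>b\<in>C2. q (a, b, 0) = a \<and> q (a, b, 1) = b) \<and>
          (\<forall>a\<in>C1. \<forall>b\<in>C2. \<forall>t\<in>{0..1}. \<forall>a'\<in>C1. \<forall>b'\<in>C2. \<forall>t'\<in>{0..1}.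
              q (a, b, t) = q (a', b', t') \<longleftrightarrow>
              (t = t' \<and> ((0 < t \<and> t < 1 \<and> a = a' \<and> b = b') \<or> (t = 0 \<and> a = a')
                          \<or> (t = 1 \<and> b = b')))))"

end

theory Submission
  imports Defs
begin

text \<open>Each isometry \<open>g\<close> of \<open>X\<close> induces a homeomorphism of \<open>\<partial>X\<close> with the cone topology: by
  convexity of the CAT(0) metric, rays from \<open>x0\<close> and from \<open>g x0\<close> to the same boundary point
  stay within \<open>d(x0, g x0)\<close>, while rays from \<open>x0\<close> diverge at most linearly.
  In the join \<open>C1 * C2\<close> the points of \<open>C1 \<union> C2\<close> are exactly the branch points (three arcs
  meeting only at their common start), since near any other point the join is an open
  segment; so a homeomorphism preserves \<open>C1 \<union> C2\<close>. Any \<open>a \<in> C1\<close> and \<open>b \<in> C2\<close> are joined by a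
  path whose interior avoids \<open>C1 \<union> C2\<close>, whereas two distinct points of one \<open>Ci\<close> are not,
  because the projection of such a path to \<open>Ci\<close> would be a non-constant path in a Cantor set.
  Hence every homeomorphism of \<open>\<partial>X\<close> preserves or swaps \<open>C1\<close> and \<open>C2\<close>, and the elements of
  \<open>G\<close> preserving them form a subgroup of index at most two.\<close>

section \<open>Comparison triangles in CAT(0) spaces\<close>

lemma euclidean_triangle_exists:
  fixes L1 L2 B :: real
  assumes "L1 > 0" "L2 \<ge> 0" "B \<ge> 0" "B \<le> L1 + L2" "L1 \<le> B + L2" "L2 \<le> B + L1"
  shows "\<exists>z::complex. cmod z = L2 \<and> cmod (of_real L1 - z) = B \<and>
           Re z = (L1^2 + L2^2 - B^2) / (2 * L1)"
proof -
  define u where "u = (L1^2 + L2^2 - B^2) / (2 * L1)"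
  have u: "2 * L1 * u = L1^2 + L2^2 - B^2" using assms(1) unfolding u_def by (simp add: field_simps)
  have "(L1 - L2)^2 \<le> B^2" "B^2 \<le> (L1 + L2)^2"
    using assms by (simp_all add: abs_le_square_iff[symmetric])
  then have "\<bar>L1^2 + L2^2 - B^2\<bar> \<le> 2 * L1 * L2"
    using assms by (simp add: power2_eq_square algebra_simps abs_le_iff)
  then have "(2 * L1)^2 * u^2 \<le> (2 * L1)^2 * L2^2"
    using assms u by (simp add: abs_le_square_iff[symmetric] power_mult_distrib[symmetric])
  then have uL: "u^2 \<le> L2^2" using assms(1) by simp
  define v where "v = sqrt (L2^2 - u^2)"
  have v2: "v^2 = L2^2 - u^2" unfolding v_def using uL by simp
  have "cmod (Complex u v) = L2" using v2 assms(2) by (simp add: cmod_def)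
  moreover have "(L1 - u)^2 + v^2 = B^2" using v2 u by (simp add: power2_eq_square algebra_simps)
  then have "cmod (of_real L1 - Complex u v) = B" using assms(3) by (simp add: cmod_def)
  ultimately show ?thesis by (intro exI[of _ "Complex u v"]) (simp add: u_def)
qed

lemma geodesic_start: "geodesic g x y \<Longrightarrow> g 0 = x"
  unfolding geodesic_def by simp

lemma geodesic_dist:
  "geodesic g x y \<Longrightarrow> s \<in> {0..dist x y} \<Longrightarrow> t \<in> {0..dist x y} \<Longrightarrow> dist (g s) (g t) = \<bar>s - t\<bar>"
  unfolding geodesic_def by blast

lemma geodesic_dist_start:
  assumes "geodesic g x y" "s \<in> {0..dist x y}"
  shows "dist x (g s) = s"
  using geodesic_dist[OF assms(1) _ assms(2), of 0] assms by (simp add: geodesic_start)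

lemma geodesic_reverse:
  "geodesic g x y \<Longrightarrow> geodesic (\<lambda>s. g (dist x y - s)) y x"
  unfolding geodesic_def by (auto simp: dist_commute abs_minus_commute)

lemma CAT0_geodesic_exists: "CAT0_space TYPE('a::metric_space) \<Longrightarrow> \<exists>g. geodesic g (x::'a) y"
  unfolding CAT0_space_def geodesic_space_def by blast

text \<open>The comparison triangle of \<open>p, q, q'\<close> is placed with \<open>p\<close> at \<open>0\<close> and \<open>q\<close> on the
  positive real axis; then the comparison point of \<open>s1 s\<close> is \<open>s\<close> and that of \<open>s2 u\<close> is
  \<open>(u / d(p,q')) z\<close>.\<close>
lemma CAT0_comparison_common_vertex:
  fixes p q q' :: "'a::metric_space"
  assumes cat: "CAT0_space TYPE('a)"
    and s1: "geodesic s1 p q" and s2: "geodesic s2 p q'" and pq: "dist p q > 0"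
    and z: "cmod z = dist p q'" "cmod (of_real (dist p q) - z) = dist q q'"
    and s: "s \<in> {0..dist p q}" and u: "u \<in> {0..dist p q'}"
  shows "dist (s1 s) (s2 u) \<le> cmod (of_real s - of_real (u / dist p q') * z)"
proof -
  obtain g where g: "geodesic g q q'" using CAT0_geodesic_exists[OF cat] by blast
  define r where "r = (\<lambda>t. s2 (dist p q' - t))"
  have r: "geodesic r q' p" unfolding r_def by (rule geodesic_reverse[OF s2])
  define y' where "y' = (of_real (dist p q) :: complex)"
  have sides: "dist 0 y' = dist p q" "dist y' z = dist q q'" "dist z 0 = dist q' p"
    using z unfolding y'_def by (simp_all add: dist_complex_def dist_commute norm_minus_commute)
  define P where "P = triangle_pairs s1 p q 0 y' \<union> triangle_pairs g q q' y' z \<union> triangle_pairs r q' p z 0"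
  have CAT0: "\<forall>(a, a')\<in>P. \<forall>(b, b')\<in>P. dist a b \<le> dist a' b'"
    using cat[unfolded CAT0_space_def, THEN conjunct2, rule_format, of s1 p q g q' r 0 y' z]
      s1 g r sides unfolding P_def Let_def by blast
  have "(s1 s, 0 + of_real (s / dist p q) * (y' - 0)) \<in> P"
    unfolding P_def triangle_pairs_def using s by blast
  moreover have "0 + of_real (s / dist p q) * (y' - 0) = (of_real s :: complex)"
    unfolding y'_def using pq by simp
  ultimately have P1: "(s1 s, of_real s) \<in> P" by simp
  define t where "t = dist p q' - u"
  have "t \<in> {0..dist q' p}" using u by (simp add: t_def dist_commute)
  then have "(r t, z + of_real (t / dist q' p) * (0 - z)) \<in> P"
    unfolding P_def triangle_pairs_def by blast
  moreover have "r t = s2 u" unfolding r_def t_def by simp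
  moreover have "z + of_real (t / dist q' p) * (0 - z) = of_real (u / dist p q') * z"
  proof (cases "dist p q' = 0")
    case True then show ?thesis using z u by (simp add: t_def)
  next
    case False
    have "z + of_real (t / dist q' p) * (0 - z) = of_real (1 - t / dist p q') * z"
      by (simp add: dist_commute algebra_simps)
    also have "1 - t / dist p q' = u / dist p q'" using False by (simp add: t_def field_simps)
    finally show ?thesis .
  qed
  ultimately have P2: "(s2 u, of_real (u / dist p q') * z) \<in> P" by simp
  have "dist (s1 s) (s2 u) \<le> dist (of_real s :: complex) (of_real (u / dist p q') * z)"
    using CAT0 P1 P2 by fast
  then show ?thesis by (simp add: dist_complex_def)
qed

lemma CAT0_dist_geodesics_common_start:
  fixes p q q' :: "'a::metric_space"
  assumes cat: "CAT0_space TYPE('a)"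
    and s1: "geodesic s1 p q" and s2: "geodesic s2 p q'" and l: "0 \<le> l" "l \<le> 1"
  shows "dist (s1 (l * dist p q)) (s2 (l * dist p q')) \<le> l * dist q q'"
proof -
  have in_range: "l * dist x y \<in> {0..dist x y}" for x y :: 'a
    using l mult_left_le_one_le[of "dist x y" l] by simp
  consider "p = q" | "p = q'" | "dist p q > 0" "dist p q' > 0" by fastforce
  then show ?thesis
  proof cases
    case 1
    then show ?thesis
      using geodesic_dist_start[OF s2 in_range] geodesic_start[OF s1] by simp
  next
    case 2
    then show ?thesis
      using geodesic_dist_start[OF s1 in_range] geodesic_start[OF s2] by (simp add: dist_commute)
  next
    case 3
    obtain z where z: "cmod z = dist p q'" "cmod (of_real (dist p q) - z) = dist q q'"
      using euclidean_triangle_exists[of "dist p q" "dist p q'" "dist q q'"] 3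
        dist_triangle[of p q q'] dist_triangle[of p q' q] dist_triangle[of q q' p]
      by (auto simp: dist_commute)
    have "dist (s1 (l * dist p q)) (s2 (l * dist p q')) \<le>
          cmod (of_real (l * dist p q) - of_real (l * dist p q' / dist p q') * z)"
      using CAT0_comparison_common_vertex[OF cat s1 s2 _ z in_range in_range] 3 by blast
    also have "of_real (l * dist p q) - of_real (l * dist p q' / dist p q') * z =
               of_real l * (of_real (dist p q) - z)"
      using 3 by (simp add: algebra_simps)
    also have "cmod \<dots> = l * dist q q'" using z l by (simp add: norm_mult)
    finally show ?thesis .
  qed
qed

text \<open>Convexity of the metric: compare both geodesics with a geodesic from \<open>p\<close> to \<open>q'\<close>.\<close>
lemma CAT0_dist_geodesics_convex:
  fixes p q p' q' :: "'a::metric_space"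
  assumes cat: "CAT0_space TYPE('a)"
    and s1: "geodesic s1 p q" and s2: "geodesic s2 p' q'" and l: "0 \<le> l" "l \<le> 1"
  shows "dist (s1 (l * dist p q)) (s2 (l * dist p' q')) \<le> (1 - l) * dist p p' + l * dist q q'"
proof -
  obtain s3 where s3: "geodesic s3 p q'" using CAT0_geodesic_exists[OF cat] by blast
  have "dist (s1 (l * dist p q)) (s3 (l * dist p q')) \<le> l * dist q q'"
    using CAT0_dist_geodesics_common_start[OF cat s1 s3 l] .
  moreover have "dist (s3 (dist p q' - (1 - l) * dist q' p)) (s2 (dist p' q' - (1 - l) * dist q' p'))
      \<le> (1 - l) * dist p p'"
    using CAT0_dist_geodesics_common_start[OF cat geodesic_reverse[OF s3] geodesic_reverse[OF s2], of "1 - l"] l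
    by simp
  moreover have "dist p q' - (1 - l) * dist q' p = l * dist p q'"
    "dist p' q' - (1 - l) * dist q' p' = l * dist p' q'"
    by (simp_all add: dist_commute algebra_simps)
  ultimately show ?thesis
    using dist_triangle[of "s1 (l * dist p q)" "s2 (l * dist p' q')" "s3 (l * dist p q')"] by simp
qed

lemma CAT0_thin_triangle:
  fixes p q q' :: "'a::metric_space"
  assumes cat: "CAT0_space TYPE('a)"
    and s1: "geodesic s1 p q" and s2: "geodesic s2 p q'"
    and pos: "dist p q > 0" "dist p q' > 0"
    and t: "0 \<le> t" "t \<le> dist p q" "t \<le> dist p q'"
  shows "(dist (s1 t) (s2 t))^2 \<le> 2 * t^2 * (dist q q' + dist p q' - dist p q) / dist p q'"
proof -
  define L1 L2 B where "L1 = dist p q" and "L2 = dist p q'" and "B = dist q q'"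
  have tri: "B \<le> L1 + L2" "L1 \<le> B + L2" "L2 \<le> B + L1"
    unfolding L1_def L2_def B_def
    using dist_triangle[of p q q'] dist_triangle[of p q' q] dist_triangle[of q q' p]
    by (auto simp: dist_commute)
  have L1: "L1 > 0" and L2: "L2 > 0" using pos unfolding L1_def L2_def by auto
  obtain z where z: "cmod z = L2" "cmod (of_real L1 - z) = B" "Re z = (L1^2 + L2^2 - B^2) / (2 * L1)"
    using euclidean_triangle_exists[of L1 L2 B] tri L1 L2 unfolding B_def by auto
  have "dist (s1 t) (s2 t) \<le> cmod (of_real t - of_real (t / L2) * z)"
    using CAT0_comparison_common_vertex[OF cat s1 s2 pos(1), of z t t] z t
    unfolding L1_def L2_def B_def by auto
  then have "(dist (s1 t) (s2 t))^2 \<le> (cmod (of_real t - of_real (t / L2) * z))^2"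
    by (simp add: power_mono)
  also have "\<dots> = (t - t / L2 * Re z)^2 + (t / L2 * Im z)^2"
    by (simp add: cmod_power2)
  also have "\<dots> = t^2 - 2 * t^2 * Re z / L2 + t^2 / L2^2 * ((Re z)^2 + (Im z)^2)"
    using L2 by (simp add: power2_eq_square field_simps)
  also have "(Re z)^2 + (Im z)^2 = L2^2" using z(1) by (simp add: cmod_power2[symmetric])
  also have "t^2 - 2 * t^2 * Re z / L2 + t^2 / L2^2 * L2^2 =
             t^2 * (2 * L1 * L2 - (L1^2 + L2^2 - B^2)) / (L1 * L2)"
  proof -
    have "L1^2 + L2^2 - B^2 = 2 * L1 * Re z" using z(3) L1 by (simp add: field_simps)
    then show ?thesis using L1 L2 by (simp add: field_simps power2_eq_square)
  qed
  also have "\<dots> \<le> t^2 * (2 * L1 * (B + L2 - L1)) / (L1 * L2)"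
  proof -
    have "(L1 - B)^2 \<le> L2^2" using tri L2 by (simp add: abs_le_square_iff[symmetric])
    then have "2 * L1 * L2 - (L1^2 + L2^2 - B^2) \<le> 2 * L1 * (B + L2 - L1)"
      by (simp add: power2_eq_square algebra_simps)
    then show ?thesis using L1 L2 by (intro divide_right_mono mult_left_mono) auto
  qed
  also have "\<dots> = 2 * t^2 * (B + L2 - L1) / L2" using L1 L2 by (simp add: field_simps)
  finally show ?thesis unfolding L1_def L2_def B_def .
qed

section \<open>Geodesic rays\<close>

lemma geodesic_ray_dist:
  "geodesic_ray a \<Longrightarrow> s \<ge> 0 \<Longrightarrow> t \<ge> 0 \<Longrightarrow> dist (a s) (a t) = \<bar>s - t\<bar>"
  unfolding geodesic_ray_def by blast

lemma geodesic_ray_geodesic: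
  assumes "geodesic_ray a" "T \<ge> 0"
  shows "geodesic a (a 0) (a T)"
  using assms geodesic_ray_dist[OF assms(1), of 0 T] unfolding geodesic_def geodesic_ray_def by auto

text \<open>Convexity makes \<open>t \<mapsto> d(a t, b t)\<close> convex; being bounded, it is non-increasing.\<close>
lemma CAT0_asymptotic_rays_dist_le:
  fixes a b :: "real \<Rightarrow> 'a::metric_space"
  assumes cat: "CAT0_space TYPE('a)"
    and a: "geodesic_ray a" and b: "geodesic_ray b" and ab: "asymptotic a b" and t: "t \<ge> 0"
  shows "dist (a t) (b t) \<le> dist (a 0) (b 0)"
proof (rule field_le_epsilon)
  obtain K where K: "\<And>s. s \<ge> 0 \<Longrightarrow> dist (a s) (b s) \<le> K" using ab unfolding asymptotic_def by blast
  have K0: "K \<ge> 0" using K[of 0] zero_le_dist[of "a 0" "b 0"] by linarith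
  fix e :: real assume e: "e > 0"
  define T where "T = t + 1 + t * K / e"
  define l where "l = t / T"
  have T: "T > 0" "t \<le> T" unfolding T_def using t K0 e by (simp_all add: add_pos_nonneg)
  have l: "0 \<le> l" "l \<le> 1" unfolding l_def using t T by auto
  have lT: "l * dist (a 0) (a T) = t" "l * dist (b 0) (b T) = t"
    using geodesic_ray_dist[OF a, of 0 T] geodesic_ray_dist[OF b, of 0 T] T unfolding l_def by auto
  have "dist (a t) (b t) \<le> (1 - l) * dist (a 0) (b 0) + l * dist (a T) (b T)"
    using CAT0_dist_geodesics_convex[OF cat geodesic_ray_geodesic[OF a] geodesic_ray_geodesic[OF b] l,
        of T T] T lT by simp
  moreover have "(1 - l) * dist (a 0) (b 0) \<le> dist (a 0) (b 0)"
    using l mult_left_le_one_le[of "dist (a 0) (b 0)" "1 - l"] by simp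
  moreover have "l * dist (a T) (b T) \<le> l * K" using K[of T] T l by (simp add: mult_left_mono)
  moreover have "t * K \<le> e * T" unfolding T_def using e t K0 by (simp add: algebra_simps)
  then have "l * K \<le> e" using T unfolding l_def by (simp add: divide_le_eq)
  ultimately show "dist (a t) (b t) \<le> dist (a 0) (b 0) + e" by linarith
qed

lemma CAT0_rays_common_start_dist_le:
  fixes a b :: "real \<Rightarrow> 'a::metric_space"
  assumes cat: "CAT0_space TYPE('a)"
    and a: "geodesic_ray a" and b: "geodesic_ray b" and ab: "a 0 = b 0"
    and r: "0 \<le> r" "r \<le> R" "R > 0"
  shows "dist (a r) (b r) \<le> r / R * dist (a R) (b R)"
proof -
  have "dist (a 0) (a R) = R" "dist (a 0) (b R) = R"
    using geodesic_ray_dist[OF a, of 0 R] geodesic_ray_dist[OF b, of 0 R] r ab by simp_all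
  moreover have "geodesic b (a 0) (b R)" using geodesic_ray_geodesic[OF b, of R] ab r by simp
  ultimately show ?thesis
    using CAT0_dist_geodesics_common_start[OF cat geodesic_ray_geodesic[OF a, of R], of b "b R" "r / R"] r
    by simp
qed

lemma CAT0_geodesic_to_ray_close:
  fixes c :: "real \<Rightarrow> 'a::metric_space"
  assumes cat: "CAT0_space TYPE('a)" and c: "geodesic_ray c"
    and g: "geodesic g x (c T)" and T: "T \<ge> 0" and t: "0 \<le> t" "t < dist x (c T)"
  shows "dist (c t) (g t) \<le> 2 * dist x (c 0)"
proof -
  define D A where "D = dist x (c 0)" and "A = dist x (c T)"
  have A: "A > 0" "t < A" using t unfolding A_def by auto
  have AT: "\<bar>T - A\<bar> \<le> D"
    using dist_triangle[of "c 0" "c T" x] dist_triangle[of x "c T" "c 0"] geodesic_ray_dist[OF c, of 0 T] T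
    unfolding A_def D_def by (simp add: dist_commute abs_le_iff)
  define l where "l = t / A"
  have l: "0 \<le> l" "l \<le> 1" "l * A = t" unfolding l_def using A t by auto
  have "dist (g (l * A)) (c (l * dist (c 0) (c T))) \<le> (1 - l) * D + l * dist (c T) (c T)"
    using CAT0_dist_geodesics_convex[OF cat g geodesic_ray_geodesic[OF c T] l(1,2)]
    unfolding A_def D_def .
  then have "dist (g t) (c (l * T)) \<le> (1 - l) * D"
    using l geodesic_ray_dist[OF c, of 0 T] T by simp
  also have "\<dots> \<le> D" using l D_def mult_left_le_one_le[of D "1 - l"] by simp
  finally have 1: "dist (g t) (c (l * T)) \<le> D" .
  have "dist (c (l * T)) (c t) = \<bar>l * T - t\<bar>" using geodesic_ray_dist[OF c] l t T by simp
  also have "l * T - t = t * (T - A) / A" unfolding l_def using A by (simp add: field_simps)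
  also have "\<bar>\<dots>\<bar> = t * \<bar>T - A\<bar> / A" using A t by (simp add: abs_mult)
  also have "\<dots> \<le> A * D / A"
    using AT A t by (intro divide_right_mono mult_mono) auto
  finally have 2: "dist (c (l * T)) (c t) \<le> D" using A by simp
  show ?thesis
    using 1 2 dist_triangle[of "c t" "g t" "c (l * T)"] unfolding D_def by (simp add: dist_commute)
qed

lemma CAT0_geodesics_to_ray_dist_sq:
  fixes c :: "real \<Rightarrow> 'a::metric_space"
  assumes cat: "CAT0_space TYPE('a)" and c: "geodesic_ray c"
    and g: "geodesic g x (c S)" and g': "geodesic g' x (c T)" and TS: "0 \<le> T" "T \<le> S"
    and D: "dist x (c 0) < T"
    and t: "0 \<le> t" "t < dist x (c S)" "t < dist x (c T)"
  shows "(dist (g t) (g' t))^2 \<le> 4 * t^2 * dist x (c 0) / (T - dist x (c 0))"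
proof -
  define D AS AT where "D = dist x (c 0)" and "AS = dist x (c S)" and "AT = dist x (c T)"
  have AT: "T - D \<le> AT" "AT \<le> T + D" and AS: "S - D \<le> AS"
    using dist_triangle[of "c 0" "c T" x] dist_triangle[of x "c T" "c 0"] dist_triangle[of "c 0" "c S" x]
      geodesic_ray_dist[OF c, of 0 T] geodesic_ray_dist[OF c, of 0 S] TS
    unfolding AS_def AT_def D_def by (simp_all add: dist_commute)
  have TD: "T - D > 0" using D unfolding D_def by simp
  have "dist x (c S) > 0" "dist x (c T) > 0" using t by auto
  then have "(dist (g t) (g' t))^2 \<le> 2 * t^2 * (dist (c S) (c T) + AT - AS) / AT"
    using CAT0_thin_triangle[OF cat g g' _ _ t(1)] t unfolding AS_def AT_def by simp
  also have "\<dots> \<le> 2 * t^2 * (2 * D) / AT"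
    using geodesic_ray_dist[OF c, of S T] TS AT AS TD
    by (intro divide_right_mono mult_left_mono) auto
  also have "\<dots> \<le> 2 * t^2 * (2 * D) / (T - D)"
    using AT TD D_def by (intro divide_left_mono) auto
  finally show ?thesis unfolding D_def by simp
qed

lemma Cauchy_if_dist_le_tendsto_zero:
  fixes f :: "nat \<Rightarrow> 'a::metric_space"
  assumes bound: "\<forall>\<^sub>F n in sequentially. \<forall>m\<ge>n. dist (f m) (f n) \<le> b n"
    and b: "b \<longlonglongrightarrow> 0"
  shows "Cauchy f"
  unfolding Cauchy_altdef2
proof (intro allI impI)
  fix e :: real assume "e > 0"
  then have "\<forall>\<^sub>F n in sequentially. b n < e" using b by (simp add: order_tendstoD(2))
  with bound have "\<forall>\<^sub>F n in sequentially. \<forall>m\<ge>n. dist (f m) (f n) < e"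
    by eventually_elim fastforce
  then obtain N where "\<forall>m\<ge>N. dist (f m) (f N) < e"
    unfolding eventually_sequentially by blast
  then show "\<exists>N. \<forall>n\<ge>N. dist (f n) (f N) < e" by blast
qed

lemma eventually_real_gt: "\<forall>\<^sub>F n in sequentially. a < real n"
  using filterlim_real_sequentially unfolding filterlim_at_top_dense by blast

lemma geodesic_ray_dist_gt:
  assumes "geodesic_ray c" "T \<ge> 0" "t + dist x (c 0) < T"
  shows "t < dist x (c T)"
  using dist_triangle[of "c 0" "c T" x] geodesic_ray_dist[OF assms(1), of 0 T] assms
  by (simp add: dist_commute)

lemma CAT0_geodesics_to_ray_Cauchy:
  fixes c :: "real \<Rightarrow> 'a::metric_space"
  assumes cat: "CAT0_space TYPE('a)" and c: "geodesic_ray c"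
    and sg: "\<And>n. geodesic (sg n) x (c (real n))" and t: "t \<ge> 0"
  shows "Cauchy (\<lambda>n. sg n t)"
proof (rule Cauchy_if_dist_le_tendsto_zero)
  define D where "D = dist x (c 0)"
  show "\<forall>\<^sub>F n in sequentially. \<forall>m\<ge>n. dist (sg m t) (sg n t) \<le> sqrt (4 * t^2 * D / (real n - D))"
    using eventually_real_gt[of "t + D"]
  proof eventually_elim
    case (elim n)
    have "(dist (sg m t) (sg n t))^2 \<le> 4 * t^2 * D / (real n - D)" if "m \<ge> n" for m
      using CAT0_geodesics_to_ray_dist_sq[OF cat c sg sg] geodesic_ray_dist_gt[OF c] elim that t
      unfolding D_def by simp
    then show ?case using real_le_rsqrt by blast
  qed
  have "filterlim (\<lambda>n. - D + real n) at_top sequentially"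
    by (rule filterlim_tendsto_add_at_top[OF tendsto_const filterlim_real_sequentially])
  then have "(\<lambda>n. 4 * t^2 * D / (real n - D)) \<longlonglongrightarrow> 0"
    by (intro real_tendsto_divide_at_top[OF tendsto_const]) simp
  then show "(\<lambda>n. sqrt (4 * t^2 * D / (real n - D))) \<longlonglongrightarrow> 0"
    using tendsto_real_sqrt by fastforce
qed

text \<open>The ray is the pointwise limit of the geodesics from \<open>x\<close> to \<open>c n\<close>; this is where
  completeness enters.\<close>
lemma CAT0_asymptotic_ray_from:
  fixes c :: "real \<Rightarrow> 'a::metric_space" and x :: 'a
  assumes cat: "CAT0_space TYPE('a)" and complete: "complete (UNIV::'a set)"
    and c: "geodesic_ray c"
  shows "\<exists>r. geodesic_ray r \<and> asymptotic c r \<and> r 0 = x"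
proof -
  define D where "D = dist x (c 0)"
  have "\<forall>n. \<exists>g. geodesic g x (c (real n))" using CAT0_geodesic_exists[OF cat] by blast
  then obtain sg where sg: "\<And>n. geodesic (sg n) x (c (real n))" by metis
  have "convergent (\<lambda>n. sg n t)" if "t \<ge> 0" for t
    using CAT0_geodesics_to_ray_Cauchy[OF cat c sg that] complete by (simp add: complete_def convergent_def)
  then obtain r where r: "\<And>t. t \<ge> 0 \<Longrightarrow> (\<lambda>n. sg n t) \<longlonglongrightarrow> r t"
    unfolding convergent_def by metis
  have "(\<lambda>n. sg n 0) \<longlonglongrightarrow> x" using geodesic_start[OF sg] by simp
  then have "r 0 = x" using r[of 0] LIMSEQ_unique by blast
  moreover have "geodesic_ray r"
    unfolding geodesic_ray_def
  proof (intro allI impI)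
    fix s t :: real assume st: "s \<ge> 0" "t \<ge> 0"
    from eventually_real_gt[of "max s t + D"]
    have "\<forall>\<^sub>F n in sequentially. dist (sg n s) (sg n t) = \<bar>s - t\<bar>"
    proof eventually_elim
      case (elim n)
      then have "max s t < dist x (c (real n))"
        using geodesic_ray_dist_gt[OF c, of "real n" "max s t" x] st unfolding D_def by simp
      then show ?case using geodesic_dist[OF sg, of s n t] st by simp
    qed
    then have "(\<lambda>n. \<bar>s - t\<bar>) \<longlonglongrightarrow> dist (r s) (r t)"
      using tendsto_dist[OF r[OF st(1)] r[OF st(2)]] by (rule Lim_transform_eventually[rotated])
    then show "dist (r s) (r t) = \<bar>s - t\<bar>" using LIMSEQ_unique tendsto_const by blast
  qed
  moreover have "asymptotic c r"
    unfolding asymptotic_def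
  proof (intro exI allI impI)
    fix t :: real assume t: "t \<ge> 0"
    from eventually_real_gt[of "t + D"] have "\<forall>\<^sub>F n in sequentially. dist (c t) (sg n t) \<le> 2 * D"
    proof eventually_elim
      case (elim n)
      then have "t < dist x (c (real n))"
        using geodesic_ray_dist_gt[OF c, of "real n" t x] t unfolding D_def by simp
      then show ?case using CAT0_geodesic_to_ray_close[OF cat c sg, of n t] t unfolding D_def by simp
    qed
    then show "dist (c t) (r t) \<le> 2 * D"
      by (rule tendsto_upperbound[OF tendsto_dist[OF tendsto_const r[OF t]]]) simp
  qed
  ultimately show ?thesis by blast
qed

section \<open>Isometries act by homeomorphisms on the visual boundary\<close>

lemma asymptotic_sym: "asymptotic a b \<Longrightarrow> asymptotic b a"
  unfolding asymptotic_def by (simp add: dist_commute)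

lemma asymptotic_trans: "asymptotic a b \<Longrightarrow> asymptotic b c \<Longrightarrow> asymptotic a c"
proof -
  assume "asymptotic a b" "asymptotic b c"
  then obtain K1 K2 where "\<forall>t\<ge>0. dist (a t) (b t) \<le> K1" "\<forall>t\<ge>0. dist (b t) (c t) \<le> K2"
    unfolding asymptotic_def by blast
  then have "\<forall>t\<ge>0. dist (a t) (c t) \<le> K1 + K2"
    using dist_triangle[of "a _" "c _" "b _"] by (smt (verit))
  then show "asymptotic a c" unfolding asymptotic_def by blast
qed

lemma visual_boundary_iff:
  "\<xi> \<in> visual_boundary TYPE('a::metric_space) \<longleftrightarrow> (\<exists>c::real\<Rightarrow>'a. geodesic_ray c \<and> \<xi> = ray_class c)"
  unfolding visual_boundary_def by blast

lemma visual_boundary_memberD: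
  assumes "\<xi> \<in> visual_boundary TYPE('a::metric_space)" "c1 \<in> \<xi>" "c2 \<in> \<xi>"
  shows "geodesic_ray c1" "asymptotic c1 c2"
proof -
  obtain c :: "real \<Rightarrow> 'a" where c: "\<xi> = ray_class c" using assms(1) unfolding visual_boundary_iff by blast
  have "geodesic_ray c1" "asymptotic c c1" "asymptotic c c2"
    using assms(2,3) unfolding c ray_class_def by auto
  then show "geodesic_ray c1" "asymptotic c1 c2" using asymptotic_trans[OF asymptotic_sym] by blast+
qed

lemma CAT0_visual_boundary_representative:
  fixes x :: "'a::metric_space"
  assumes cat: "CAT0_space TYPE('a)" and complete: "complete (UNIV::'a set)"
    and "\<xi> \<in> visual_boundary TYPE('a)"
  obtains c where "c \<in> \<xi>" "c 0 = x"
proof -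
  obtain c where c: "geodesic_ray c" "\<xi> = ray_class c" using assms(3) unfolding visual_boundary_iff by blast
  obtain r where "geodesic_ray r" "asymptotic c r" "r 0 = x"
    using CAT0_asymptotic_ray_from[OF cat complete c(1)] by blast
  then show thesis using that c unfolding ray_class_def by blast
qed

lemma CAT0_mem_cone_nbhd_self:
  fixes x0 :: "'a::metric_space"
  assumes cat: "CAT0_space TYPE('a)" and complete: "complete (UNIV::'a set)"
    and \<xi>: "\<xi> \<in> visual_boundary TYPE('a)" and e: "e > 0"
  shows "\<xi> \<in> cone_nbhd x0 \<xi> r e"
proof -
  obtain c where "c \<in> \<xi>" "c 0 = x0" using CAT0_visual_boundary_representative[OF cat complete \<xi>] .
  then have "\<exists>c\<in>\<xi>. \<exists>c'\<in>\<xi>. c 0 = x0 \<and> c' 0 = x0 \<and> dist (c r) (c' r) < e"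
    using e by (intro bexI[of _ c]) auto
  then show ?thesis using \<xi> by (simp add: cone_nbhd_def)
qed

lemma CAT0_topspace_cone_topology:
  fixes x0 :: "'a::metric_space"
  assumes cat: "CAT0_space TYPE('a)" and complete: "complete (UNIV::'a set)"
  shows "topspace (cone_topology x0) = visual_boundary TYPE('a)"
proof -
  let ?S = "{cone_nbhd x0 \<xi> r e | \<xi> r e. \<xi> \<in> visual_boundary TYPE('a) \<and> r > 0 \<and> e > 0}"
  have "\<Union>?S \<subseteq> visual_boundary TYPE('a)" by (auto simp: cone_nbhd_def)
  moreover have "visual_boundary TYPE('a) \<subseteq> \<Union>?S"
  proof
    fix \<xi> assume \<xi>: "\<xi> \<in> visual_boundary TYPE('a)"
    have "cone_nbhd x0 \<xi> 1 1 \<in> ?S" using \<xi> by (intro CollectI exI[of _ \<xi>] exI[of _ 1]) simp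
    moreover have "\<xi> \<in> cone_nbhd x0 \<xi> 1 1" using CAT0_mem_cone_nbhd_self[OF cat complete \<xi>] by simp
    ultimately show "\<xi> \<in> \<Union>?S" by (rule UnionI)
  qed
  ultimately show ?thesis
    unfolding cone_topology_def topology_generated_by_topspace by (rule subset_antisym)
qed

lemma isometry_dist: "isometry g \<Longrightarrow> dist (g x) (g y) = dist x y"
  unfolding isometry_def by blast

lemma isometry_bij: "isometry g \<Longrightarrow> bij g"
  unfolding isometry_def bij_def inj_def by (metis dist_eq_0_iff)

lemma isometry_inv: "isometry g \<Longrightarrow> isometry (inv g)"
  unfolding isometry_def
  by (metis bij_betw_def bij_imp_bij_inv isometry_bij isometry_def surj_f_inv_f)

lemma geodesic_ray_comp_isometry: "isometry g \<Longrightarrow> geodesic_ray (g \<circ> c) \<longleftrightarrow> geodesic_ray c"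
  unfolding geodesic_ray_def by (simp add: isometry_dist)

lemma asymptotic_comp_isometry: "isometry g \<Longrightarrow> asymptotic (g \<circ> a) (g \<circ> b) \<longleftrightarrow> asymptotic a b"
  unfolding asymptotic_def by (simp add: isometry_dist)

lemma boundary_map_comp: "boundary_map (g \<circ> h) \<xi> = boundary_map g (boundary_map h \<xi>)"
  unfolding boundary_map_def image_image by (simp add: comp_assoc)

lemma boundary_map_id: "boundary_map id \<xi> = \<xi>"
  unfolding boundary_map_def by simp

lemma boundary_map_inv_cancel:
  assumes "bij g"
  shows "boundary_map (inv g) (boundary_map g \<xi>) = \<xi>"
  using assms by (simp add: boundary_map_comp[symmetric] bij_is_inj boundary_map_id)

lemma boundary_map_ray_class:
  assumes g: "isometry g"
  shows "boundary_map g (ray_class c) = ray_class (g \<circ> c)"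
proof
  show "boundary_map g (ray_class c) \<subseteq> ray_class (g \<circ> c)"
    unfolding boundary_map_def ray_class_def
    using geodesic_ray_comp_isometry[OF g] asymptotic_comp_isometry[OF g] by auto
next
  show "ray_class (g \<circ> c) \<subseteq> boundary_map g (ray_class c)"
  proof
    fix d assume d: "d \<in> ray_class (g \<circ> c)"
    have gd: "g \<circ> (inv g \<circ> d) = d"
      using bij_is_surj[OF isometry_bij[OF g]] by (simp add: fun_eq_iff surj_f_inv_f)
    then have "inv g \<circ> d \<in> ray_class c"
      using d geodesic_ray_comp_isometry[OF g, of "inv g \<circ> d"]
        asymptotic_comp_isometry[OF g, of c "inv g \<circ> d"]
      unfolding ray_class_def by (simp add: gd)
    then show "d \<in> boundary_map g (ray_class c)"
      unfolding boundary_map_def using gd by (intro image_eqI[where f = "(\<circ>) g"]) auto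
  qed
qed

lemma boundary_map_in_visual_boundary:
  assumes g: "isometry g" and \<xi>: "\<xi> \<in> visual_boundary TYPE('a::metric_space)"
  shows "boundary_map g \<xi> \<in> visual_boundary TYPE('a)"
  using \<xi> boundary_map_ray_class[OF g] geodesic_ray_comp_isometry[OF g]
  unfolding visual_boundary_iff by metis

lemma CAT0_boundary_map_rays_dist:
  fixes x0 :: "'a::metric_space"
  assumes cat: "CAT0_space TYPE('a)" and g: "isometry g"
    and \<eta>: "\<eta> \<in> visual_boundary TYPE('a)" and \<zeta>: "\<zeta> \<in> visual_boundary TYPE('a)"
    and a: "a1 \<in> \<eta>" "a2 \<in> \<zeta>" "a1 0 = x0" "a2 0 = x0"
    and hk: "h \<in> boundary_map g \<eta>" "k \<in> boundary_map g \<zeta>" "h 0 = x0" "k 0 = x0" and R: "R \<ge> 0"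
  shows "dist (h R) (k R) \<le> 2 * dist x0 (g x0) + dist (a1 R) (a2 R)"
proof -
  have g\<eta>: "boundary_map g \<eta> \<in> visual_boundary TYPE('a)"
    and g\<zeta>: "boundary_map g \<zeta> \<in> visual_boundary TYPE('a)"
    using boundary_map_in_visual_boundary[OF g] \<eta> \<zeta> by blast+
  have ga: "g \<circ> a1 \<in> boundary_map g \<eta>" "g \<circ> a2 \<in> boundary_map g \<zeta>"
    using a unfolding boundary_map_def by auto
  have "dist (h R) ((g \<circ> a1) R) \<le> dist x0 (g x0)"
    using CAT0_asymptotic_rays_dist_le[OF cat _ _ _ R] hk a
      visual_boundary_memberD[OF g\<eta> hk(1) ga(1)] visual_boundary_memberD[OF g\<eta> ga(1) hk(1)]
    by fastforce
  moreover have "dist ((g \<circ> a2) R) (k R) \<le> dist x0 (g x0)"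
    using CAT0_asymptotic_rays_dist_le[OF cat _ _ _ R] hk a
      visual_boundary_memberD[OF g\<zeta> ga(2) hk(2)] visual_boundary_memberD[OF g\<zeta> hk(2) ga(2)]
    by (fastforce simp: dist_commute)
  moreover have "dist ((g \<circ> a1) R) ((g \<circ> a2) R) = dist (a1 R) (a2 R)" using isometry_dist[OF g] by simp
  ultimately show ?thesis
    using dist_triangle[of "h R" "k R" "(g \<circ> a1) R"] dist_triangle[of "(g \<circ> a1) R" "k R" "(g \<circ> a2) R"]
    by linarith
qed

text \<open>Rays from \<open>x0\<close> diverge at most linearly, so closeness at a large radius \<open>R\<close> transfers to
  closeness at radius \<open>r\<close>.\<close>
lemma CAT0_boundary_map_cone_nbhd:
  fixes x0 :: "'a::metric_space"
  assumes cat: "CAT0_space TYPE('a)" and complete: "complete (UNIV::'a set)"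
    and g: "isometry g" and \<eta>: "\<eta> \<in> visual_boundary TYPE('a)" and r: "r > 0"
    and g\<eta>: "boundary_map g \<eta> \<in> cone_nbhd x0 \<xi> r e"
  obtains R where "R > 0" "\<And>\<zeta>. \<zeta> \<in> cone_nbhd x0 \<eta> R 1 \<Longrightarrow> boundary_map g \<zeta> \<in> cone_nbhd x0 \<xi> r e"
proof -
  obtain c h where ch: "c \<in> \<xi>" "h \<in> boundary_map g \<eta>" "c 0 = x0" "h 0 = x0" "dist (c r) (h r) < e"
    using g\<eta> by (auto simp: cone_nbhd_def)
  define e' where "e' = e - dist (c r) (h r)"
  define D where "D = dist x0 (g x0)"
  define R where "R = r * (e' + 2 * D + 1) / e'"
  have e': "e' > 0" and D: "D \<ge> 0" using ch unfolding e'_def D_def by auto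
  have "R = r + r * (2 * D + 1) / e'" unfolding R_def using e' by (simp add: field_simps)
  moreover have "r * (2 * D + 1) / e' \<ge> 0" using r e' D by simp
  ultimately have R: "r \<le> R" "R > 0" using r by linarith+
  have small: "r / R * (2 * D + 1) < e'"
  proof -
    have "e' + 2 * D + 1 > 0" using e' D by simp
    then have "r / R = e' / (e' + 2 * D + 1)" unfolding R_def using r e' by simp
    then have "r / R * (2 * D + 1) = e' * ((2 * D + 1) / (e' + 2 * D + 1))" by simp
    also have "\<dots> < e' * 1" using e' D by (intro mult_strict_left_mono) auto
    finally show ?thesis by simp
  qed
  have "boundary_map g \<zeta> \<in> cone_nbhd x0 \<xi> r e" if \<zeta>: "\<zeta> \<in> cone_nbhd x0 \<eta> R 1" for \<zeta>
  proof -
    obtain a1 a2 where a: "\<zeta> \<in> visual_boundary TYPE('a)" "a1 \<in> \<eta>" "a2 \<in> \<zeta>" "a1 0 = x0" "a2 0 = x0"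
      "dist (a1 R) (a2 R) < 1" using \<zeta> by (auto simp: cone_nbhd_def)
    have g\<zeta>: "boundary_map g \<zeta> \<in> visual_boundary TYPE('a)" using boundary_map_in_visual_boundary[OF g a(1)] .
    obtain k where k: "k \<in> boundary_map g \<zeta>" "k 0 = x0"
      using CAT0_visual_boundary_representative[OF cat complete g\<zeta>] .
    have h: "geodesic_ray h" and k': "geodesic_ray k"
      using visual_boundary_memberD[OF boundary_map_in_visual_boundary[OF g \<eta>] ch(2) ch(2)]
        visual_boundary_memberD[OF g\<zeta> k(1) k(1)] by auto
    have "0 \<le> R" using R by simp
    from CAT0_boundary_map_rays_dist[OF cat g \<eta> a(1,2,3,4,5) ch(2) k(1) ch(4) k(2) this]
    have hk: "dist (h R) (k R) \<le> 2 * D + 1" using a(6) unfolding D_def by simp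
    have "dist (h r) (k r) \<le> r / R * dist (h R) (k R)"
      using CAT0_rays_common_start_dist_le[OF cat h k', of r R] ch(4) k(2) r R by simp
    also have "\<dots> \<le> r / R * (2 * D + 1)"
      using hk r R by (intro mult_left_mono) simp_all
    finally have "dist (c r) (k r) < e"
      using small dist_triangle[of "c r" "k r" "h r"] unfolding e'_def by linarith
    then show ?thesis
      using g\<zeta> ch(1,3) k by (auto simp: cone_nbhd_def)
  qed
  then show thesis by (rule that[OF R(2)])
qed

lemma CAT0_continuous_map_boundary_map:
  fixes x0 :: "'a::metric_space"
  assumes cat: "CAT0_space TYPE('a)" and complete: "complete (UNIV::'a set)" and g: "isometry g"
  shows "continuous_map (cone_topology x0) (cone_topology x0) (boundary_map g)"
proof -
  let ?VB = "visual_boundary TYPE('a)"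
  let ?S = "{cone_nbhd x0 \<xi> r e | \<xi> r e. \<xi> \<in> ?VB \<and> r > 0 \<and> e > 0}"
  have top: "topspace (cone_topology x0) = ?VB" using CAT0_topspace_cone_topology[OF cat complete] .
  have preimage: "openin (cone_topology x0) (boundary_map g -` U \<inter> ?VB)" if "U \<in> ?S" for U
  proof (subst openin_subopen, intro ballI)
    obtain \<xi> r e where U: "U = cone_nbhd x0 \<xi> r e" "r > 0" using \<open>U \<in> ?S\<close> by blast
    fix \<eta> assume \<eta>: "\<eta> \<in> boundary_map g -` U \<inter> ?VB"
    then obtain R where R: "R > 0" "\<And>\<zeta>. \<zeta> \<in> cone_nbhd x0 \<eta> R 1 \<Longrightarrow> boundary_map g \<zeta> \<in> U"
      using CAT0_boundary_map_cone_nbhd[OF cat complete g _ U(2)] unfolding U by blast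
    have "openin (cone_topology x0) (cone_nbhd x0 \<eta> R 1)"
      unfolding cone_topology_def using \<eta> R
      by (intro topology_generated_by_Basis CollectI exI[of _ \<eta>] exI[of _ R] exI[of _ 1]) simp
    moreover have "\<eta> \<in> cone_nbhd x0 \<eta> R 1" using CAT0_mem_cone_nbhd_self[OF cat complete] \<eta> by simp
    moreover have "cone_nbhd x0 \<eta> R 1 \<subseteq> boundary_map g -` U \<inter> ?VB"
    proof
      fix \<zeta> assume "\<zeta> \<in> cone_nbhd x0 \<eta> R 1"
      moreover from this have "\<zeta> \<in> ?VB" by (simp add: cone_nbhd_def)
      ultimately show "\<zeta> \<in> boundary_map g -` U \<inter> ?VB" using R(2) by simp
    qed
    ultimately show "\<exists>N. openin (cone_topology x0) N \<and> \<eta> \<in> N \<and> N \<subseteq> boundary_map g -` U \<inter> ?VB"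
      by blast
  qed
  have S: "\<Union>?S = ?VB" using top unfolding cone_topology_def by simp
  show ?thesis
    unfolding cone_topology_def
  proof (intro continuous_on_generated_topo)
    fix U assume "U \<in> ?S"
    then show "openin (topology_generated_by ?S) (boundary_map g -` U \<inter> topspace (topology_generated_by ?S))"
      using preimage top unfolding cone_topology_def by simp
  next
    show "boundary_map g ` topspace (topology_generated_by ?S) \<subseteq> \<Union>?S"
      using S top boundary_map_in_visual_boundary[OF g] unfolding cone_topology_def by auto
  qed
qed

lemma CAT0_homeomorphic_maps_boundary_map:
  fixes x0 :: "'a::metric_space"
  assumes cat: "CAT0_space TYPE('a)" and complete: "complete (UNIV::'a set)" and g: "isometry g"
  shows "homeomorphic_maps (cone_topology x0) (cone_topology x0) (boundary_map g) (boundary_map (inv g))"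
proof -
  have "boundary_map g (boundary_map (inv g) \<xi>) = \<xi>" for \<xi>
    using boundary_map_inv_cancel[OF isometry_bij[OF isometry_inv[OF g]]]
    by (simp add: inv_inv_eq[OF isometry_bij[OF g]])
  then show ?thesis
    unfolding homeomorphic_maps_def
    using CAT0_continuous_map_boundary_map[OF cat complete g] CAT0_continuous_map_boundary_map[OF cat complete isometry_inv[OF g]]
      boundary_map_inv_cancel[OF isometry_bij[OF g]]
    by simp
qed
section \<open>The Cantor set\<close>

definition cantor_term :: "(nat \<Rightarrow> bool) \<Rightarrow> nat \<Rightarrow> real" where
  "cantor_term a n = (if a n then 2 else 0) / 3 ^ Suc n"

text \<open>The numerator of the \<open>k\<close>-digit truncation \<open>\<Sum>i<k. cantor_term a i\<close>, over \<open>2 / 3^k\<close>.\<close>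
fun cantor_prefix :: "(nat \<Rightarrow> bool) \<Rightarrow> nat \<Rightarrow> nat" where
  "cantor_prefix a 0 = 0"
| "cantor_prefix a (Suc k) = 3 * cantor_prefix a k + (if a k then 1 else 0)"

lemma cantor_set_eq: "cantor_set = range (\<lambda>a. \<Sum>n. cantor_term a n)"
  unfolding cantor_set_def cantor_term_def ..

lemma cantor_term_le: "0 \<le> cantor_term a (n + k) \<and> cantor_term a (n + k) \<le> 2 / 3 ^ (k + 1) * (1/3) ^ n"
proof -
  have "(3::real) ^ Suc (n + k) = 3 ^ (k + 1) * 3 ^ n" by (simp add: power_add)
  then show ?thesis unfolding cantor_term_def by (simp add: power_one_over field_simps)
qed

lemma summable_cantor_term_shift: "summable (\<lambda>n. cantor_term a (n + k))"
  by (rule summable_comparison_test'[of "\<lambda>n. 2 / 3 ^ (k + 1) * (1/3) ^ n" 0])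
    (use cantor_term_le in \<open>auto intro: summable_mult\<close>)

lemma cantor_term_tail_le: "(\<Sum>n. cantor_term a (n + k)) \<le> 1 / 3 ^ k"
proof -
  have "(\<Sum>n. cantor_term a (n + k)) \<le> (\<Sum>n. 2 / 3 ^ (k + 1) * (1/3) ^ n)"
    by (intro suminf_le summable_cantor_term_shift summable_mult) (use cantor_term_le in auto)
  also have "\<dots> = 2 / 3 ^ (k + 1) * (\<Sum>n. (1/3::real) ^ n)"
    by (rule suminf_mult) simp
  also have "(\<Sum>n. (1/3::real) ^ n) = 3 / 2" by (subst suminf_geometric) auto
  finally show ?thesis by simp
qed

lemma sum_cantor_term: "(\<Sum>i<k. cantor_term a i) = 2 * real (cantor_prefix a k) / 3 ^ k"
  by (induction k) (simp_all add: cantor_term_def field_simps)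

lemma cantor_set_scaled_bounds:
  assumes "x \<in> cantor_set"
  obtains m :: nat where "2 * real m \<le> 3 ^ k * x" "3 ^ k * x \<le> 2 * real m + 1"
proof -
  obtain a where x: "x = (\<Sum>n. cantor_term a n)" using assms unfolding cantor_set_eq by blast
  have "x = (\<Sum>n. cantor_term a (n + k)) + 2 * real (cantor_prefix a k) / 3 ^ k"
    unfolding x using suminf_split_initial_segment[OF summable_cantor_term_shift[of a 0]]
    by (simp add: sum_cantor_term)
  moreover have "0 \<le> (\<Sum>n. cantor_term a (n + k))"
    by (rule suminf_nonneg[OF summable_cantor_term_shift]) (use cantor_term_le in blast)
  moreover note cantor_term_tail_le[of a k]
  ultimately have "2 * real (cantor_prefix a k) \<le> 3 ^ k * x" "3 ^ k * x \<le> 2 * real (cantor_prefix a k) + 1"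
    by (auto simp: field_simps)
  then show thesis by (rule that)
qed

text \<open>The point \<open>(o + 1/2) / 3^k\<close> with \<open>o\<close> odd lies in a removed middle third.\<close>
lemma cantor_set_gap:
  assumes xy: "x < y"
  obtains z where "x < z" "z < y" "z \<notin> cantor_set"
proof -
  obtain k :: nat where k: "3 / (y - x) < 3 ^ k"
    using real_arch_pow[of 3 "3 / (y - x)"] by auto
  define P where "P = (3::real) ^ k"
  have P: "P > 0" and kP: "3 < P * (y - x)"
    using k xy unfolding P_def by (simp_all add: divide_less_eq mult.commute)
  define N where "N = \<lfloor>P * x\<rfloor> + 1"
  define o' where "o' = (if odd N then N else N + 1)"
  have oo: "odd o'" unfolding o'_def by auto
  have o: "P * x < real_of_int o'" "real_of_int o' \<le> P * x + 2"
    unfolding o'_def N_def by (auto, linarith+)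
  define z where "z = (real_of_int o' + 1/2) / P"
  have "x < z" "z < y" unfolding z_def using o P kP by (simp_all add: field_simps)
  moreover have "z \<notin> cantor_set"
  proof
    assume "z \<in> cantor_set"
    then obtain m :: nat where "2 * real m \<le> P * z" "P * z \<le> 2 * real m + 1"
      using cantor_set_scaled_bounds[of z k] unfolding P_def by blast
    moreover have "P * z = real_of_int o' + 1/2" unfolding z_def using P by simp
    ultimately have "o' = 2 * int m" by linarith
    then show False using oo by simp
  qed
  ultimately show thesis by (rule that)
qed

lemma continuous_on_into_cantor_set_const:
  fixes S :: "'a::topological_space set"
  assumes S: "connected S" and f: "continuous_on S f" and fS: "f ` S \<subseteq> cantor_set"
    and s: "s \<in> S" "s' \<in> S"
  shows "f s = f s'"
proof -
  have "False" if uv: "u \<in> S" "v \<in> S" "f u < f v" for u v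
  proof -
    obtain z where z: "f u < z" "z < f v" "z \<notin> cantor_set" using cantor_set_gap[OF uv(3)] .
    have "z \<in> f ` S"
      using connected_contains_Icc[OF connected_continuous_image[OF f S], of "f u" "f v"] uv z by auto
    then show False using fS z by auto
  qed
  then show ?thesis using s by (metis linorder_neqE_linordered_idom)
qed

lemma cantor_set_three_points: "0 \<in> cantor_set" "2/3 \<in> cantor_set" "2/9 \<in> cantor_set"
proof -
  have single: "(\<Sum>n. cantor_term (\<lambda>n. n = j) n) = 2 / 3 ^ Suc j" for j
  proof -
    have "cantor_term (\<lambda>n. n = j) = (\<lambda>n. if n = j then 2 / 3 ^ Suc j else 0)"
      by (auto simp: fun_eq_iff cantor_term_def)
    then show ?thesis using sums_single[of j "\<lambda>_. 2 / 3 ^ Suc j :: real"] sums_unique by metis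
  qed
  have mem: "(\<Sum>n. cantor_term a n) \<in> cantor_set" for a unfolding cantor_set_eq by (rule rangeI)
  show "0 \<in> cantor_set" using mem[of "\<lambda>n. False"] by (simp add: cantor_term_def)
  show "2/3 \<in> cantor_set" using mem[of "\<lambda>n. n = 0"] single[of 0] by simp
  have "(2::real) / 3 ^ Suc 1 = 2/9" by simp
  then show "2/9 \<in> cantor_set" using mem[of "\<lambda>n. n = 1"] single[of 1] by metis
qed

lemma cantor_subspace_continuous_map_const:
  assumes C: "is_cantor_subspace T C" and \<phi>: "continuous_map (top_of_set S) (subtopology T C) \<phi>"
    and S: "connected S" and s: "s \<in> S" "s' \<in> S"
  shows "\<phi> s = \<phi> s'"
proof -
  obtain h h' where hh': "homeomorphic_maps (subtopology T C) (subtopology euclideanreal cantor_set) h h'"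
    using C unfolding is_cantor_subspace_def homeomorphic_space_def by blast
  then have "continuous_map (top_of_set S) (subtopology euclideanreal cantor_set) (h \<circ> \<phi>)"
    using continuous_map_compose[OF \<phi>] unfolding homeomorphic_maps_def by blast
  then have "continuous_on S (h \<circ> \<phi>)" "(h \<circ> \<phi>) ` S \<subseteq> cantor_set"
    unfolding continuous_map_in_subtopology by auto
  then have "(h \<circ> \<phi>) s = (h \<circ> \<phi>) s'" by (rule continuous_on_into_cantor_set_const[OF S _ _ s])
  moreover have "\<phi> s \<in> topspace (subtopology T C)" "\<phi> s' \<in> topspace (subtopology T C)"
    using \<phi> s unfolding continuous_map_def by auto
  ultimately show ?thesis using hh' unfolding homeomorphic_maps_def by (metis comp_apply)
qed

lemma cantor_subspace_three_points:
  assumes C: "is_cantor_subspace T C"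
  obtains x y z where "x \<in> C" "y \<in> C" "z \<in> C" "x \<noteq> y" "x \<noteq> z" "y \<noteq> z"
proof -
  obtain h h' where hh': "homeomorphic_maps (subtopology T C) (subtopology euclideanreal cantor_set) h h'"
    using C unfolding is_cantor_subspace_def homeomorphic_space_def by blast
  then have inv: "\<And>y. y \<in> cantor_set \<Longrightarrow> h (h' y) = y" and mem: "\<And>y. y \<in> cantor_set \<Longrightarrow> h' y \<in> C"
    unfolding homeomorphic_maps_def continuous_map_def by auto
  have "h' a \<noteq> h' b" if "a \<in> cantor_set" "b \<in> cantor_set" "a \<noteq> b" for a b
    using inv that by metis
  then have "h' 0 \<noteq> h' (2/3)" "h' 0 \<noteq> h' (2/9)" "h' (2/3) \<noteq> h' (2/9)"
    using cantor_set_three_points by simp_all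
  then show thesis using that mem cantor_set_three_points by blast
qed

section \<open>Branch points\<close>

definition is_branch_point :: "'b topology \<Rightarrow> 'b \<Rightarrow> bool" where
  "is_branch_point T p \<longleftrightarrow> (\<exists>g1 g2 g3.
      (\<forall>g\<in>{g1, g2, g3}. pathin T g \<and> inj_on g {0..1} \<and> g 0 = p) \<and>
      g1 ` {0..1} \<inter> g2 ` {0..1} = {p} \<and> g1 ` {0..1} \<inter> g3 ` {0..1} = {p} \<and>
      g2 ` {0..1} \<inter> g3 ` {0..1} = {p})"

lemma pathin_image_subset: "pathin T g \<Longrightarrow> g ` {0..1} \<subseteq> topspace T"
  unfolding pathin_def continuous_map_def by auto

lemma is_branch_point_image:
  assumes f: "continuous_map X Y f" and inj: "inj_on f (topspace X)" and p: "is_branch_point X p"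
  shows "is_branch_point Y (f p)"
proof -
  obtain g1 g2 g3 where g: "\<forall>g\<in>{g1, g2, g3}. pathin X g \<and> inj_on g {0..1} \<and> g 0 = p"
    and meet: "g1 ` {0..1} \<inter> g2 ` {0..1} = {p}" "g1 ` {0..1} \<inter> g3 ` {0..1} = {p}"
      "g2 ` {0..1} \<inter> g3 ` {0..1} = {p}"
    using p unfolding is_branch_point_def by blast
  have arcs: "pathin Y (f \<circ> g) \<and> inj_on (f \<circ> g) {0..1} \<and> (f \<circ> g) 0 = f p" if "g \<in> {g1, g2, g3}" for g
  proof -
    have g': "pathin X g" "inj_on g {0..1}" "g 0 = p" using g that by auto
    have "inj_on f (g ` {0..1})" using inj_on_subset[OF inj pathin_image_subset[OF g'(1)]] .
    then show ?thesis using pathin_compose[OF g'(1) f] g' comp_inj_on by auto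
  qed
  have meet': "(f \<circ> ga) ` {0..1} \<inter> (f \<circ> gb) ` {0..1} = {f p}"
    if "ga \<in> {g1, g2, g3}" "gb \<in> {g1, g2, g3}" "ga ` {0..1} \<inter> gb ` {0..1} = {p}" for ga gb
  proof -
    have "ga ` {0..1} \<subseteq> topspace X" "gb ` {0..1} \<subseteq> topspace X"
      using g that(1,2) pathin_image_subset by blast+
    then have "f ` (ga ` {0..1} \<inter> gb ` {0..1}) = f ` ga ` {0..1} \<inter> f ` gb ` {0..1}"
      by (intro inj_on_image_Int[OF inj])
    then show ?thesis using that(3) by (simp add: image_comp)
  qed
  have "\<forall>g\<in>{f \<circ> g1, f \<circ> g2, f \<circ> g3}. pathin Y g \<and> inj_on g {0..1} \<and> g 0 = f p"
    using arcs by blast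
  moreover have "(f \<circ> g1) ` {0..1} \<inter> (f \<circ> g2) ` {0..1} = {f p}"
    "(f \<circ> g1) ` {0..1} \<inter> (f \<circ> g3) ` {0..1} = {f p}" "(f \<circ> g2) ` {0..1} \<inter> (f \<circ> g3) ` {0..1} = {f p}"
    using meet' meet by simp_all
  ultimately show ?thesis unfolding is_branch_point_def by blast
qed

section \<open>The join of two Cantor sets\<close>

locale cantor_join =
  fixes T :: "'b topology" and C1 C2 :: "'b set" and q :: "'b \<times> 'b \<times> real \<Rightarrow> 'b"
  assumes cantor1: "is_cantor_subspace T C1" and cantor2: "is_cantor_subspace T C2"
    and quotient: "quotient_map (prod_topology (subtopology T C1)
               (prod_topology (subtopology T C2) (top_of_set {0..1::real}))) T q"
    and ends: "\<And>a b. a \<in> C1 \<Longrightarrow> b \<in> C2 \<Longrightarrow> q (a, b, 0) = a \<and> q (a, b, 1) = b"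
    and q_eq_iff: "\<And>a b t a' b' t'. a \<in> C1 \<Longrightarrow> b \<in> C2 \<Longrightarrow> t \<in> {0..1} \<Longrightarrow>
              a' \<in> C1 \<Longrightarrow> b' \<in> C2 \<Longrightarrow> t' \<in> {0..1} \<Longrightarrow>
              q (a, b, t) = q (a', b', t') \<longleftrightarrow>
              (t = t' \<and> ((0 < t \<and> t < 1 \<and> a = a' \<and> b = b') \<or> (t = 0 \<and> a = a')
                          \<or> (t = 1 \<and> b = b')))"
begin

abbreviation Y :: "('b \<times> 'b \<times> real) topology" where
  "Y \<equiv> prod_topology (subtopology T C1) (prod_topology (subtopology T C2) (top_of_set {0..1::real}))"

lemma C1_subset: "C1 \<subseteq> topspace T" and C2_subset: "C2 \<subseteq> topspace T"
  using cantor1 cantor2 unfolding is_cantor_subspace_def by simp_all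

lemma topspace_Y: "topspace Y = C1 \<times> C2 \<times> {0..1}"
  using C1_subset C2_subset by auto

lemma q_image: "q ` (C1 \<times> C2 \<times> {0..1}) = topspace T"
  using quotient topspace_Y unfolding quotient_map_def by simp

lemma q_in_topspace: "a \<in> C1 \<Longrightarrow> b \<in> C2 \<Longrightarrow> t \<in> {0..1} \<Longrightarrow> q (a, b, t) \<in> topspace T"
  using q_image by blast

lemma topspace_cases:
  assumes "z \<in> topspace T"
  obtains a b t where "a \<in> C1" "b \<in> C2" "t \<in> {0..1}" "z = q (a, b, t)"
  using assms q_image by force

lemma C1_nonempty: "\<exists>a. a \<in> C1" and C2_nonempty: "\<exists>b. b \<in> C2"
  by (rule cantor_subspace_three_points[OF cantor1], blast)
    (rule cantor_subspace_three_points[OF cantor2], blast)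

lemma C1_C2_disjoint: "C1 \<inter> C2 = {}"
proof -
  have "x \<notin> C2" if "x \<in> C1" for x
  proof
    assume "x \<in> C2"
    then have "q (x, x, 0) = q (x, x, 1)" using ends that by simp
    then show False using q_eq_iff[OF that \<open>x \<in> C2\<close> _ that \<open>x \<in> C2\<close>, of 0 1] by simp
  qed
  then show ?thesis by blast
qed

text \<open>Join coordinates of a point, chosen by \<open>SOME\<close>; only \<open>height\<close> is determined everywhere,
  \<open>left_end\<close> off \<open>C2\<close> and \<open>right_end\<close> off \<open>C1\<close>.\<close>
definition coords :: "'b \<Rightarrow> 'b \<times> 'b \<times> real" where
  "coords z = (SOME y. y \<in> C1 \<times> C2 \<times> {0..1} \<and> q y = z)"

definition height :: "'b \<Rightarrow> real" where "height z = snd (snd (coords z))"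
definition left_end :: "'b \<Rightarrow> 'b" where "left_end z = fst (coords z)"
definition right_end :: "'b \<Rightarrow> 'b" where "right_end z = fst (snd (coords z))"

lemma coords_q:
  assumes abt: "a \<in> C1" "b \<in> C2" "t \<in> {0..1}"
  shows "snd (snd (coords (q (a, b, t)))) = t \<and> (t < 1 \<longrightarrow> fst (coords (q (a, b, t))) = a) \<and>
         (0 < t \<longrightarrow> fst (snd (coords (q (a, b, t)))) = b)"
proof -
  obtain a' b' t' where c: "coords (q (a, b, t)) = (a', b', t')" by (metis prod_cases3)
  have "coords (q (a, b, t)) \<in> C1 \<times> C2 \<times> {0..1} \<and> q (coords (q (a, b, t))) = q (a, b, t)"
    unfolding coords_def by (rule someI[of _ "(a, b, t)"]) (use abt in auto)
  then have "a' \<in> C1" "b' \<in> C2" "t' \<in> {0..1}" "q (a', b', t') = q (a, b, t)" unfolding c by auto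
  then show ?thesis using q_eq_iff[OF \<open>a' \<in> C1\<close> \<open>b' \<in> C2\<close> \<open>t' \<in> {0..1}\<close> abt] c by auto
qed

lemma height_q: "a \<in> C1 \<Longrightarrow> b \<in> C2 \<Longrightarrow> t \<in> {0..1} \<Longrightarrow> height (q (a, b, t)) = t"
  using coords_q unfolding height_def by blast

lemma left_end_q: "a \<in> C1 \<Longrightarrow> b \<in> C2 \<Longrightarrow> t \<in> {0..<1} \<Longrightarrow> left_end (q (a, b, t)) = a"
  using coords_q unfolding left_end_def by simp

lemma right_end_q: "a \<in> C1 \<Longrightarrow> b \<in> C2 \<Longrightarrow> t \<in> {0<..1} \<Longrightarrow> right_end (q (a, b, t)) = b"
  using coords_q unfolding right_end_def by simp

lemma continuous_map_height: "continuous_map T euclideanreal height"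
proof (rule continuous_compose_quotient_map[OF quotient])
  have "continuous_map Y (top_of_set {0..1}) (snd \<circ> snd)"
    by (rule continuous_map_compose[OF continuous_map_snd continuous_map_snd])
  then have "continuous_map Y euclideanreal (snd \<circ> snd)"
    unfolding continuous_map_in_subtopology by blast
  then show "continuous_map Y euclideanreal (height \<circ> q)"
    by (rule continuous_map_eq) (auto simp: topspace_Y height_q)
qed

lemma height_range: "z \<in> topspace T \<Longrightarrow> height z \<in> {0..1}"
  by (erule topspace_cases) (simp add: height_q)

lemma C1_eq: "C1 = {z \<in> topspace T. height z = 0}"
proof (intro equalityI subsetI)
  fix a assume a: "a \<in> C1"
  obtain b where b: "b \<in> C2" using C2_nonempty by blast
  show "a \<in> {z \<in> topspace T. height z = 0}"
    using height_q[OF a b, of 0] ends[OF a b] C1_subset a by auto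
next
  fix z assume "z \<in> {z \<in> topspace T. height z = 0}"
  then obtain a b t where "a \<in> C1" "b \<in> C2" "t \<in> {0..1}" "z = q (a, b, t)" "height z = 0"
    using topspace_cases by blast
  then show "z \<in> C1" using height_q ends by auto
qed

lemma C2_eq: "C2 = {z \<in> topspace T. height z = 1}"
proof (intro equalityI subsetI)
  fix b assume b: "b \<in> C2"
  obtain a where a: "a \<in> C1" using C1_nonempty by blast
  show "b \<in> {z \<in> topspace T. height z = 1}"
    using height_q[OF a b, of 1] ends[OF a b] C2_subset b by auto
next
  fix z assume "z \<in> {z \<in> topspace T. height z = 1}"
  then obtain a b t where "a \<in> C1" "b \<in> C2" "t \<in> {0..1}" "z = q (a, b, t)" "height z = 1"
    using topspace_cases by blast
  then show "z \<in> C2" using height_q ends by auto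
qed

lemma height_C1: "a \<in> C1 \<Longrightarrow> height a = 0"
  using C1_eq by blast

lemma height_C2: "b \<in> C2 \<Longrightarrow> height b = 1"
  using C2_eq by blast

lemma continuous_map_left_end:
  "continuous_map (subtopology T (topspace T - C2)) (subtopology T C1) left_end"
proof -
  have "topspace T - C2 = {z \<in> topspace T. height z \<in> {..<1}}"
    using height_range by (subst C2_eq) fastforce
  then have "openin T (topspace T - C2)"
    using openin_continuous_map_preimage[OF continuous_map_height, of "{..<1}"] by simp
  then have qr: "quotient_map (subtopology Y {x \<in> topspace Y. q x \<in> topspace T - C2})
      (subtopology T (topspace T - C2)) q"
    using quotient_map_restriction[OF quotient] by blast
  show ?thesis
  proof (rule continuous_compose_quotient_map[OF qr])
    show "continuous_map (subtopology Y {x \<in> topspace Y. q x \<in> topspace T - C2}) (subtopology T C1) (left_end \<circ> q)"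
    proof (rule continuous_map_eq[OF continuous_map_from_subtopology[OF continuous_map_fst]])
      fix x assume "x \<in> topspace (subtopology Y {x \<in> topspace Y. q x \<in> topspace T - C2})"
      then obtain a b t where x: "x = (a, b, t)" "a \<in> C1" "b \<in> C2" "t \<in> {0..1}" "q (a, b, t) \<notin> C2"
        by (auto simp: topspace_Y)
      then have "t \<noteq> 1" using ends by auto
      then show "fst x = (left_end \<circ> q) x" using left_end_q x by simp
    qed
  qed
qed

lemma continuous_map_right_end:
  "continuous_map (subtopology T (topspace T - C1)) (subtopology T C2) right_end"
proof -
  have "topspace T - C1 = {z \<in> topspace T. height z \<in> {0<..}}"
    using height_range by (subst C1_eq) fastforce
  then have "openin T (topspace T - C1)"
    using openin_continuous_map_preimage[OF continuous_map_height, of "{0<..}"] by simp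
  then have qr: "quotient_map (subtopology Y {x \<in> topspace Y. q x \<in> topspace T - C1})
      (subtopology T (topspace T - C1)) q"
    using quotient_map_restriction[OF quotient] by blast
  show ?thesis
  proof (rule continuous_compose_quotient_map[OF qr])
    show "continuous_map (subtopology Y {x \<in> topspace Y. q x \<in> topspace T - C1}) (subtopology T C2) (right_end \<circ> q)"
    proof (rule continuous_map_eq[OF continuous_map_from_subtopology[OF
            continuous_map_compose[OF continuous_map_snd continuous_map_fst]]])
      fix x assume "x \<in> topspace (subtopology Y {x \<in> topspace Y. q x \<in> topspace T - C1})"
      then obtain a b t where x: "x = (a, b, t)" "a \<in> C1" "b \<in> C2" "t \<in> {0..1}" "q (a, b, t) \<notin> C1"
        by (auto simp: topspace_Y)
      then have "t \<noteq> 0" using ends by auto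
      then show "(fst \<circ> snd) x = (right_end \<circ> q) x" using right_end_q x by simp
    qed
  qed
qed

lemma pathin_q:
  assumes a: "a \<in> C1" and b: "b \<in> C2"
    and r: "continuous_map (top_of_set {0..1}) (top_of_set {0..1}) r"
  shows "pathin T (\<lambda>s. q (a, b, r s))"
proof -
  have "continuous_map (top_of_set {0..1}) Y (\<lambda>s. (a, b, r s))"
    by (intro continuous_map_pairedI) (use a b r C1_subset C2_subset in auto)
  then show ?thesis
    unfolding pathin_def using continuous_map_compose quotient_imp_continuous_map[OF quotient]
    by (fastforce simp: o_def)
qed

lemma is_branch_point_C1:
  assumes p: "p \<in> C1"
  shows "is_branch_point T p"
proof -
  obtain b1 b2 b3 where b: "b1 \<in> C2" "b2 \<in> C2" "b3 \<in> C2" "b1 \<noteq> b2" "b1 \<noteq> b3" "b2 \<noteq> b3"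
    using cantor_subspace_three_points[OF cantor2] .
  define g where "g b = (\<lambda>s. q (p, b, s))" for b
  have arc: "pathin T (g b) \<and> inj_on (g b) {0..1} \<and> g b 0 = p" if b: "b \<in> C2" for b
  proof (intro conjI)
    show "pathin T (g b)" unfolding g_def using pathin_q[OF p b, of "\<lambda>s. s"] by simp
    show "inj_on (g b) {0..1}" unfolding g_def inj_on_def using q_eq_iff[OF p b _ p b] by simp
    show "g b 0 = p" unfolding g_def using ends[OF p b] by simp
  qed
  have "g b ` {0..1} \<inter> g b' ` {0..1} = {p}" if bb': "b \<in> C2" "b' \<in> C2" "b \<noteq> b'" for b b'
  proof -
    have "s = 0" if "s \<in> {0..1}" "s' \<in> {0..1}" "g b s = g b' s'" for s s'
      using q_eq_iff[OF p bb'(1) that(1) p bb'(2) that(2)] that(3) bb'(3) unfolding g_def by auto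
    then have "g b ` {0..1} \<inter> g b' ` {0..1} \<subseteq> {g b 0}"
      by (intro subsetI, elim IntE imageE, simp only: singleton_iff) metis
    moreover have "p \<in> g b ` {0..1}" "p \<in> g b' ` {0..1}"
      using arc[OF bb'(1)] arc[OF bb'(2)] by (metis atLeastAtMost_iff image_eqI order_refl zero_le_one)+
    ultimately show ?thesis using arc[OF bb'(1)] by auto
  qed
  then show ?thesis unfolding is_branch_point_def using arc b
    by (intro exI[of _ "g b1"] exI[of _ "g b2"] exI[of _ "g b3"]) auto
qed

lemma is_branch_point_C2:
  assumes p: "p \<in> C2"
  shows "is_branch_point T p"
proof -
  obtain a1 a2 a3 where a: "a1 \<in> C1" "a2 \<in> C1" "a3 \<in> C1" "a1 \<noteq> a2" "a1 \<noteq> a3" "a2 \<noteq> a3"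
    using cantor_subspace_three_points[OF cantor1] .
  define g where "g a = (\<lambda>s. q (a, p, 1 - s))" for a
  have arc: "pathin T (g a) \<and> inj_on (g a) {0..1} \<and> g a 0 = p" if a: "a \<in> C1" for a
  proof (intro conjI)
    have "continuous_map (top_of_set {0..1}) (top_of_set {0..1::real}) (\<lambda>s. 1 - s)"
      by (auto intro!: continuous_map_into_subtopology continuous_intros)
    then show "pathin T (g a)" unfolding g_def by (rule pathin_q[OF a p])
    show "inj_on (g a) {0..1}" unfolding g_def inj_on_def using q_eq_iff[OF a p _ a p] by simp
    show "g a 0 = p" unfolding g_def using ends[OF a p] by simp
  qed
  have "g a ` {0..1} \<inter> g a' ` {0..1} = {p}" if aa': "a \<in> C1" "a' \<in> C1" "a \<noteq> a'" for a a'
  proof -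
    have "s = 0" if "s \<in> {0..1}" "s' \<in> {0..1}" "g a s = g a' s'" for s s'
      using q_eq_iff[OF aa'(1) p _ aa'(2) p, of "1 - s" "1 - s'"] that aa'(3) unfolding g_def by auto
    then have "g a ` {0..1} \<inter> g a' ` {0..1} \<subseteq> {g a 0}"
      by (intro subsetI, elim IntE imageE, simp only: singleton_iff) metis
    moreover have "p \<in> g a ` {0..1}" "p \<in> g a' ` {0..1}"
      using arc[OF aa'(1)] arc[OF aa'(2)] by (metis atLeastAtMost_iff image_eqI order_refl zero_le_one)+
    ultimately show ?thesis using arc[OF aa'(1)] by auto
  qed
  then show ?thesis unfolding is_branch_point_def using arc a
    by (intro exI[of _ "g a1"] exI[of _ "g a2"] exI[of _ "g a3"]) auto
qed

text \<open>Near an interior point of the segment from \<open>a0\<close> to \<open>b0\<close>, a path cannot leave the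
  segment: its endpoint projections are continuous maps into Cantor sets, hence constant.\<close>
lemma path_stays_in_segment:
  assumes g: "pathin T g" and a0: "a0 \<in> C1" and b0: "b0 \<in> C2" and t0: "0 < t0" "t0 < 1"
    and p: "g 0 = q (a0, b0, t0)"
  obtains \<epsilon> where "0 < \<epsilon>" "\<epsilon> \<le> 1"
    "\<And>s. s \<in> {0..\<epsilon>} \<Longrightarrow> g s = q (a0, b0, height (g s)) \<and> height (g s) \<in> {0<..<1}"
proof -
  define E where "E = {z \<in> topspace T. height z \<in> {0<..<1}}"
  have "openin T E" unfolding E_def by (rule openin_continuous_map_preimage[OF continuous_map_height]) simp
  moreover have gc: "continuous_map (top_of_set {0..1}) T g" using g unfolding pathin_def .
  ultimately have "openin (top_of_set {0..1}) {s \<in> {0..1::real}. g s \<in> E}"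
    using openin_continuous_map_preimage by fastforce
  moreover have "g 0 \<in> E" using p t0 height_q[OF a0 b0] q_in_topspace[OF a0 b0] unfolding E_def by simp
  ultimately obtain e where e: "e > 0" "\<And>s. s \<in> {0..1} \<Longrightarrow> dist s 0 < e \<Longrightarrow> g s \<in> E"
    unfolding openin_euclidean_subtopology_iff by force
  define \<epsilon> where "\<epsilon> = min (e/2) 1"
  have eps: "\<epsilon> > 0" "\<epsilon> \<le> 1" using e unfolding \<epsilon>_def by auto
  have gE: "g s \<in> E" if "s \<in> {0..\<epsilon>}" for s
    using e that unfolding \<epsilon>_def by (auto simp: dist_real_def)
  have "g s \<in> topspace T - C2" "g s \<in> topspace T - C1" if "s \<in> {0..\<epsilon>}" for s
    using gE[OF that] height_C1 height_C2 unfolding E_def by fastforce+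
  moreover have "continuous_map (top_of_set {0..\<epsilon>}) T g"
    using continuous_map_from_subtopology[OF gc, of "{0..\<epsilon>}"] eps by (simp add: subtopology_subtopology Int_absorb1)
  ultimately have "continuous_map (top_of_set {0..\<epsilon>}) (subtopology T (topspace T - C2)) g"
    "continuous_map (top_of_set {0..\<epsilon>}) (subtopology T (topspace T - C1)) g"
    by (auto intro!: continuous_map_into_subtopology)
  then have lc: "continuous_map (top_of_set {0..\<epsilon>}) (subtopology T C1) (left_end \<circ> g)"
    and rc: "continuous_map (top_of_set {0..\<epsilon>}) (subtopology T C2) (right_end \<circ> g)"
    using continuous_map_compose continuous_map_left_end continuous_map_right_end by blast+
  have "left_end (g 0) = a0" "right_end (g 0) = b0"
    using p t0 left_end_q[OF a0 b0] right_end_q[OF a0 b0] by auto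
  then have ends0: "left_end (g s) = a0" "right_end (g s) = b0" if "s \<in> {0..\<epsilon>}" for s
    using cantor_subspace_continuous_map_const[OF cantor1 lc connected_Icc that, where s' = 0]
      cantor_subspace_continuous_map_const[OF cantor2 rc connected_Icc that, where s' = 0] eps by auto
  have "g s = q (a0, b0, height (g s)) \<and> height (g s) \<in> {0<..<1}" if s: "s \<in> {0..\<epsilon>}" for s
  proof -
    obtain a b t where abt: "a \<in> C1" "b \<in> C2" "t \<in> {0..1}" "g s = q (a, b, t)"
      using gE[OF s] topspace_cases unfolding E_def by blast
    moreover have t: "height (g s) = t" "t \<in> {0<..<1}" using gE[OF s] abt height_q unfolding E_def by auto
    moreover have "a = a0" "b = b0" using ends0[OF s] abt t left_end_q right_end_q by auto
    ultimately show ?thesis by simp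
  qed
  with eps show thesis by (rule that)
qed

lemma arc_covers_segment_interval:
  assumes g: "pathin T g" "inj_on g {0..1}" "g 0 = q (a0, b0, t0)"
    and a0: "a0 \<in> C1" and b0: "b0 \<in> C2" and t0: "0 < t0" "t0 < 1"
  obtains t1 where "t1 \<noteq> t0" "t1 \<in> {0<..<1}"
    "\<And>y. y \<in> {min t0 t1..max t0 t1} \<Longrightarrow> q (a0, b0, y) \<in> g ` {0..1}"
proof -
  obtain \<epsilon> where eps: "0 < \<epsilon>" "\<epsilon> \<le> 1"
    and seg: "\<And>s. s \<in> {0..\<epsilon>} \<Longrightarrow> g s = q (a0, b0, height (g s)) \<and> height (g s) \<in> {0<..<1}"
    using path_stays_in_segment[OF g(1) a0 b0 t0 g(3)] by blast
  define \<tau> where "\<tau> = height \<circ> g"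
  have "continuous_map (top_of_set {0..1}) euclideanreal \<tau>"
    unfolding \<tau>_def using g(1) continuous_map_compose continuous_map_height unfolding pathin_def by blast
  then have \<tau>_cont: "continuous_on {0..\<epsilon>} \<tau>" using eps by (auto intro: continuous_on_subset)
  have \<tau>0: "\<tau> 0 = t0" unfolding \<tau>_def using g(3) t0 height_q[OF a0 b0] by simp
  have \<tau>_end: "\<tau> \<epsilon> \<in> {0<..<1}" using seg[of \<epsilon>] eps unfolding \<tau>_def by simp
  have "\<tau> \<epsilon> \<noteq> t0"
  proof
    assume "\<tau> \<epsilon> = t0"
    then have "g \<epsilon> = g 0" using seg[of \<epsilon>] eps g(3) unfolding \<tau>_def by simp
    moreover have "\<epsilon> \<in> {0..1}" "0 \<in> {0..1::real}" using eps by auto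
    ultimately have "\<epsilon> = 0" using inj_onD[OF g(2)] by blast
    then show False using eps by simp
  qed
  have "q (a0, b0, y) \<in> g ` {0..1}" if y: "y \<in> \<tau> ` {0..\<epsilon>}" for y
  proof -
    obtain s where s: "s \<in> {0..\<epsilon>}" "\<tau> s = y" using y by blast
    then have "g s = q (a0, b0, y)" using seg[OF s(1)] unfolding \<tau>_def by simp
    moreover have "s \<in> {0..1}" using s(1) eps by auto
    ultimately show ?thesis by (metis image_eqI)
  qed
  moreover have "{min t0 (\<tau> \<epsilon>)..max t0 (\<tau> \<epsilon>)} \<subseteq> \<tau> ` {0..\<epsilon>}"
  proof -
    have "\<tau> 0 \<in> \<tau> ` {0..\<epsilon>}" "\<tau> \<epsilon> \<in> \<tau> ` {0..\<epsilon>}" using eps by auto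
    then show ?thesis
      using connected_contains_Icc[OF connected_continuous_image[OF \<tau>_cont connected_Icc]] \<tau>0
      by (cases "t0 \<le> \<tau> \<epsilon>") (simp_all add: min_def max_def)
  qed
  ultimately have "q (a0, b0, y) \<in> g ` {0..1}" if y: "y \<in> {min t0 (\<tau> \<epsilon>)..max t0 (\<tau> \<epsilon>)}" for y
    using y by blast
  with \<open>\<tau> \<epsilon> \<noteq> t0\<close> \<tau>_end show thesis by (rule that)
qed

lemma arc_covers_side_of_segment:
  assumes g: "pathin T g" "inj_on g {0..1}" "g 0 = q (a0, b0, t0)"
    and a0: "a0 \<in> C1" and b0: "b0 \<in> C2" and t0: "0 < t0" "t0 < 1"
  obtains d \<delta> where "d \<in> {-1, 1}" "0 < \<delta>" "\<delta> \<le> t0" "\<delta> \<le> 1 - t0"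
    "\<And>v. v \<in> {0..\<delta>} \<Longrightarrow> q (a0, b0, t0 + d * v) \<in> g ` {0..1}"
proof -
  obtain t1 where t1: "t1 \<noteq> t0" "t1 \<in> {0<..<1}"
    and hit: "\<And>y. y \<in> {min t0 t1..max t0 t1} \<Longrightarrow> q (a0, b0, y) \<in> g ` {0..1}"
    using arc_covers_segment_interval[OF g a0 b0 t0] by blast
  define d where "d = sgn (t1 - t0)"
  define \<delta> where "\<delta> = min \<bar>t1 - t0\<bar> (min t0 (1 - t0))"
  show thesis
  proof (rule that)
    show "d \<in> {-1, 1}" using t1(1) unfolding d_def by (simp add: sgn_if)
    show "0 < \<delta>" "\<delta> \<le> t0" "\<delta> \<le> 1 - t0" using t1(1) t0 unfolding \<delta>_def by auto
    show "q (a0, b0, t0 + d * v) \<in> g ` {0..1}" if v: "v \<in> {0..\<delta>}" for v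
    proof (rule hit)
      show "t0 + d * v \<in> {min t0 t1..max t0 t1}"
      proof (cases "t0 < t1")
        case True
        then have "d = 1" "0 \<le> v" "v \<le> t1 - t0" using v unfolding d_def \<delta>_def by auto
        then show ?thesis by simp
      next
        case False
        then have "d = -1" "0 \<le> v" "v \<le> t0 - t1" using v t1(1) unfolding d_def \<delta>_def by auto
        then show ?thesis by simp
      qed
    qed
  qed
qed

lemma arcs_covering_same_side_overlap:
  assumes a0: "a0 \<in> C1" and b0: "b0 \<in> C2" and t0: "t0 \<in> {0..1}"
    and meet: "ga ` {0..1} \<inter> gb ` {0..1} = {q (a0, b0, t0)}" and d: "d \<in> {-1, 1}"
    and \<delta>a: "\<delta>a > 0" "\<delta>a \<le> t0" "\<delta>a \<le> 1 - t0" and \<delta>b: "\<delta>b > 0"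
    and ga: "\<And>v. v \<in> {0..\<delta>a} \<Longrightarrow> q (a0, b0, t0 + d * v) \<in> ga ` {0..1}"
    and gb: "\<And>v. v \<in> {0..\<delta>b} \<Longrightarrow> q (a0, b0, t0 + d * v) \<in> gb ` {0..1}"
  shows False
proof -
  define v where "v = min \<delta>a \<delta>b"
  have v: "v > 0" "v \<in> {0..\<delta>a}" "v \<in> {0..\<delta>b}" using \<delta>a \<delta>b unfolding v_def by auto
  then have "q (a0, b0, t0 + d * v) \<in> ga ` {0..1} \<inter> gb ` {0..1}" using ga gb by blast
  then have "q (a0, b0, t0 + d * v) = q (a0, b0, t0)" using meet by blast
  moreover have "t0 + d * v \<in> {0..1}" using d \<delta>a v by auto
  ultimately have "t0 + d * v = t0" using height_q[OF a0 b0] t0 by metis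
  then show False using v d by auto
qed

text \<open>Three arcs from an interior point of a segment cover one of its two sides each, so two of
  them overlap beyond their starting point.\<close>
lemma not_is_branch_point_segment:
  assumes p: "p \<in> topspace T" "p \<notin> C1 \<union> C2"
  shows "\<not> is_branch_point T p"
proof
  assume "is_branch_point T p"
  then obtain g1 g2 g3 where g: "\<forall>g\<in>{g1, g2, g3}. pathin T g \<and> inj_on g {0..1} \<and> g 0 = p"
    and meet0: "g1 ` {0..1} \<inter> g2 ` {0..1} = {p}" "g1 ` {0..1} \<inter> g3 ` {0..1} = {p}"
      "g2 ` {0..1} \<inter> g3 ` {0..1} = {p}"
    unfolding is_branch_point_def by blast
  obtain a0 b0 t0 where abt: "a0 \<in> C1" "b0 \<in> C2" "t0 \<in> {0..1}" "p = q (a0, b0, t0)"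
    using topspace_cases[OF p(1)] .
  note meet = meet0[unfolded abt(4)]
  have "t0 \<noteq> 0" "t0 \<noteq> 1" using p(2) abt ends[OF abt(1,2)] by auto
  then have t0: "0 < t0" "t0 < 1" using abt(3) by auto
  have arc: "pathin T g" "inj_on g {0..1}" "g 0 = q (a0, b0, t0)" if "g \<in> {g1, g2, g3}" for g
    using g that abt(4) by auto
  obtain d1 \<delta>1 where 1: "d1 \<in> {-1, 1}" "0 < \<delta>1" "\<delta>1 \<le> t0" "\<delta>1 \<le> 1 - t0"
    "\<And>v. v \<in> {0..\<delta>1} \<Longrightarrow> q (a0, b0, t0 + d1 * v) \<in> g1 ` {0..1}"
    using arc_covers_side_of_segment[OF arc[of g1, simplified] abt(1,2) t0] by blast
  obtain d2 \<delta>2 where 2: "d2 \<in> {-1, 1}" "0 < \<delta>2" "\<delta>2 \<le> t0" "\<delta>2 \<le> 1 - t0"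
    "\<And>v. v \<in> {0..\<delta>2} \<Longrightarrow> q (a0, b0, t0 + d2 * v) \<in> g2 ` {0..1}"
    using arc_covers_side_of_segment[OF arc[of g2, simplified] abt(1,2) t0] by blast
  obtain d3 \<delta>3 where 3: "d3 \<in> {-1, 1}" "0 < \<delta>3" "\<delta>3 \<le> t0" "\<delta>3 \<le> 1 - t0"
    "\<And>v. v \<in> {0..\<delta>3} \<Longrightarrow> q (a0, b0, t0 + d3 * v) \<in> g3 ` {0..1}"
    using arc_covers_side_of_segment[OF arc[of g3, simplified] abt(1,2) t0] by blast
  have "d1 = d2 \<or> d1 = d3 \<or> d2 = d3" using 1(1) 2(1) 3(1) by auto
  then show False
  proof (elim disjE)
    assume "d1 = d2"
    from arcs_covering_same_side_overlap[OF abt(1-3) meet(1) 1(1-4) 2(2) 1(5) 2(5)[folded this]]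
    show False .
  next
    assume "d1 = d3"
    from arcs_covering_same_side_overlap[OF abt(1-3) meet(2) 1(1-4) 3(2) 1(5) 3(5)[folded this]]
    show False .
  next
    assume "d2 = d3"
    from arcs_covering_same_side_overlap[OF abt(1-3) meet(3) 2(1-4) 3(2) 2(5) 3(5)[folded this]]
    show False .
  qed
qed

lemma is_branch_point_iff:
  assumes "z \<in> topspace T"
  shows "is_branch_point T z \<longleftrightarrow> z \<in> C1 \<union> C2"
proof
  show "z \<in> C1 \<union> C2" if "is_branch_point T z" using not_is_branch_point_segment[OF assms] that by blast
  show "is_branch_point T z" if "z \<in> C1 \<union> C2" using is_branch_point_C1 is_branch_point_C2 that by blast
qed

definition bridged :: "'b \<Rightarrow> 'b \<Rightarrow> bool" where
  "bridged x y \<longleftrightarrow> (\<exists>g. pathin T g \<and> g 0 = x \<and> g 1 = y \<and> (\<forall>s\<in>{0<..<1}. g s \<notin> C1 \<union> C2))"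

lemma bridged_C1_C2:
  assumes a: "a \<in> C1" and b: "b \<in> C2"
  shows "bridged a b"
proof -
  have "q (a, b, s) \<notin> C1 \<union> C2" if "s \<in> {0<..<1}" for s
    using that height_q[OF a b, of s] height_C1 height_C2 by auto
  then show ?thesis unfolding bridged_def using pathin_q[OF a b, of "\<lambda>s. s"] ends[OF a b]
    by (intro exI[of _ "\<lambda>s. q (a, b, s)"]) auto
qed

lemma bridged_C1_imp_eq:
  assumes x: "x \<in> C1" and y: "y \<in> C1" and xy: "bridged x y"
  shows "x = y"
proof -
  obtain g where g: "pathin T g" "g 0 = x" "g 1 = y" "\<forall>s\<in>{0<..<1}. g s \<notin> C1 \<union> C2"
    using xy unfolding bridged_def by blast
  have "g s \<in> topspace T - C2" if "s \<in> {0..1}" for s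
    using pathin_image_subset[OF g(1)] that g x y C1_C2_disjoint by (cases "s = 0 \<or> s = 1") auto
  then have "continuous_map (top_of_set {0..1}) (subtopology T (topspace T - C2)) g"
    using g(1) unfolding pathin_def by (auto intro: continuous_map_into_subtopology)
  then have "left_end (g 0) = left_end (g 1)"
    using cantor_subspace_continuous_map_const[OF cantor1
        continuous_map_compose[OF _ continuous_map_left_end] connected_Icc] by fastforce
  moreover have "left_end z = z" if "z \<in> C1" for z
    using C2_nonempty left_end_q[OF that, of _ 0] ends[OF that] by force
  ultimately show ?thesis using g x y by simp
qed

lemma bridged_C2_imp_eq:
  assumes x: "x \<in> C2" and y: "y \<in> C2" and xy: "bridged x y"
  shows "x = y"
proof -
  obtain g where g: "pathin T g" "g 0 = x" "g 1 = y" "\<forall>s\<in>{0<..<1}. g s \<notin> C1 \<union> C2"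
    using xy unfolding bridged_def by blast
  have "g s \<in> topspace T - C1" if "s \<in> {0..1}" for s
    using pathin_image_subset[OF g(1)] that g x y C1_C2_disjoint by (cases "s = 0 \<or> s = 1") auto
  then have "continuous_map (top_of_set {0..1}) (subtopology T (topspace T - C1)) g"
    using g(1) unfolding pathin_def by (auto intro: continuous_map_into_subtopology)
  then have "right_end (g 0) = right_end (g 1)"
    using cantor_subspace_continuous_map_const[OF cantor2
        continuous_map_compose[OF _ continuous_map_right_end] connected_Icc] by fastforce
  moreover have "right_end z = z" if "z \<in> C2" for z
    using C1_nonempty right_end_q[OF _ that, of _ 1] ends[OF _ that] by force
  ultimately show ?thesis using g x y by simp
qed

lemma homeomorphic_maps_bridged:
  assumes f: "homeomorphic_maps T T f f'" and xy: "bridged x y"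
  shows "bridged (f x) (f y)"
proof -
  obtain g where g: "pathin T g" "g 0 = x" "g 1 = y" "\<forall>s\<in>{0<..<1}. g s \<notin> C1 \<union> C2"
    using xy unfolding bridged_def by blast
  have fc: "continuous_map T T f" "continuous_map T T f'" and f'f: "\<And>z. z \<in> topspace T \<Longrightarrow> f' (f z) = z"
    using f unfolding homeomorphic_maps_def by auto
  have inj: "inj_on f' (topspace T)"
    using f homeomorphic_imp_injective_map unfolding homeomorphic_maps_map by blast
  have "f (g s) \<notin> C1 \<union> C2" if "s \<in> {0<..<1}" for s
  proof
    assume "f (g s) \<in> C1 \<union> C2"
    have gs: "g s \<in> topspace T" using pathin_image_subset[OF g(1)] that by auto
    then have "f (g s) \<in> topspace T" using continuous_map_image_subset_topspace[OF fc(1)] by blast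
    then have "is_branch_point T (f (g s))" using \<open>f (g s) \<in> C1 \<union> C2\<close> is_branch_point_iff by blast
    then have "is_branch_point T (g s)" using is_branch_point_image[OF fc(2) inj] f'f[OF gs] by metis
    then show False using gs g(4) that is_branch_point_iff by blast
  qed
  moreover have "pathin T (f \<circ> g)" using pathin_compose[OF g(1)] f unfolding homeomorphic_maps_def by blast
  ultimately show ?thesis unfolding bridged_def using g by (intro exI[of _ "f \<circ> g"]) auto
qed

lemma homeomorphic_maps_cones:
  assumes f: "homeomorphic_maps T T f f'" and z: "z \<in> C1 \<union> C2"
  shows "f z \<in> C1 \<union> C2"
proof -
  have fc: "continuous_map T T f" using f unfolding homeomorphic_maps_def by blast
  have inj: "inj_on f (topspace T)"
    using f homeomorphic_imp_injective_map unfolding homeomorphic_maps_map by blast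
  have zT: "z \<in> topspace T" using z C1_subset C2_subset by blast
  then have "is_branch_point T (f z)" using is_branch_point_image[OF fc inj] is_branch_point_iff z by blast
  moreover have "f z \<in> topspace T" using continuous_map_image_subset_topspace[OF fc] zT by blast
  ultimately show ?thesis using is_branch_point_iff by blast
qed

text \<open>The segment from \<open>a\<close> to \<open>b\<close> is mapped to a path bridging \<open>f a \<noteq> f b\<close>, which forces
  them into different cones.\<close>
lemma homeomorphic_maps_opposite_cones:
  assumes f: "homeomorphic_maps T T f f'" and a: "a \<in> C1" and b: "b \<in> C2"
  shows "f a \<in> C1 \<longleftrightarrow> f b \<in> C2"
proof -
  have "a \<noteq> b" using a b C1_C2_disjoint by blast
  moreover have "a = f' (f a)" "b = f' (f b)"
    using f a b C1_subset C2_subset unfolding homeomorphic_maps_def by auto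
  ultimately have ne: "f a \<noteq> f b" by metis
  have br: "bridged (f a) (f b)" using homeomorphic_maps_bridged[OF f bridged_C1_C2[OF a b]] .
  show ?thesis
  proof
    assume "f a \<in> C1"
    show "f b \<in> C2"
    proof (rule ccontr)
      assume "f b \<notin> C2"
      then have "f b \<in> C1" using homeomorphic_maps_cones[OF f, of b] b by blast
      then show False using bridged_C1_imp_eq[OF \<open>f a \<in> C1\<close> _ br] ne by blast
    qed
  next
    assume "f b \<in> C2"
    show "f a \<in> C1"
    proof (rule ccontr)
      assume "f a \<notin> C1"
      then have "f a \<in> C2" using homeomorphic_maps_cones[OF f, of a] a by blast
      then show False using bridged_C2_imp_eq[OF _ \<open>f b \<in> C2\<close> br] ne by blast
    qed
  qed
qed

lemma homeomorphic_maps_cones_into: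
  assumes f: "homeomorphic_maps T T f f'"
  shows "(f ` C1 \<subseteq> C1 \<and> f ` C2 \<subseteq> C2) \<or> (f ` C1 \<subseteq> C2 \<and> f ` C2 \<subseteq> C1)"
proof -
  note opposite = homeomorphic_maps_opposite_cones[OF f] and cones = homeomorphic_maps_cones[OF f]
  obtain a0 b0 where a0: "a0 \<in> C1" and b0: "b0 \<in> C2" using C1_nonempty C2_nonempty by blast
  show ?thesis
  proof (cases "f a0 \<in> C1")
    case True
    then have "f b \<in> C2" if "b \<in> C2" for b using opposite[OF a0 that] by blast
    moreover from this have "f a \<in> C1" if "a \<in> C1" for a using opposite[OF that b0] b0 by blast
    ultimately show ?thesis by blast
  next
    case False
    then have "f b \<in> C1" if "b \<in> C2" for b using opposite[OF a0 that] cones[of b] that by blast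
    moreover from this have "f b0 \<notin> C2" using b0 C1_C2_disjoint by blast
    then have "f a \<in> C2" if "a \<in> C1" for a using opposite[OF that b0] cones[of a] that by blast
    ultimately show ?thesis by blast
  qed
qed

lemma homeomorphic_maps_preserve_or_swap_cones:
  assumes f: "homeomorphic_maps T T f f'"
  shows "(f ` C1 = C1 \<and> f ` C2 = C2) \<or> (f ` C1 = C2 \<and> f ` C2 = C1)"
proof -
  have f'f: "\<And>z. z \<in> topspace T \<Longrightarrow> f' (f z) = z" and ff': "\<And>z. z \<in> topspace T \<Longrightarrow> f (f' z) = z"
    using f unfolding homeomorphic_maps_def by auto
  have onto: "f ` A = B" if "f ` A \<subseteq> B" "f' ` B \<subseteq> A" "B \<subseteq> topspace T" for A B
  proof -
    have "(\<lambda>z. f (f' z)) ` B = (\<lambda>z. z) ` B" using ff' that(3) by (intro image_cong) auto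
    then have "B = f ` f' ` B" by (simp add: image_image)
    also have "\<dots> \<subseteq> f ` A" using that(2) by (rule image_mono)
    finally show ?thesis using that(1) by (rule subset_antisym[rotated])
  qed
  obtain a0 where a0: "a0 \<in> C1" using C1_nonempty by blast
  have a0': "f' (f a0) = a0" using f'f a0 C1_subset by blast
  note f_into = homeomorphic_maps_cones_into[OF f]
    and f'_into = homeomorphic_maps_cones_into[OF f[THEN iffD1[OF homeomorphic_maps_sym]]]
  show ?thesis
  proof (cases "f a0 \<in> C1")
    case True
    then have "\<not> f ` C1 \<subseteq> C2" using a0 C1_C2_disjoint by blast
    then have "f ` C1 \<subseteq> C1" "f ` C2 \<subseteq> C2" using f_into by blast+
    moreover have "\<not> f' ` C1 \<subseteq> C2" using True a0 a0' C1_C2_disjoint by force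
    then have "f' ` C1 \<subseteq> C1" "f' ` C2 \<subseteq> C2" using f'_into by blast+
    ultimately have "f ` C1 = C1" "f ` C2 = C2"
      using onto[OF _ _ C1_subset] onto[OF _ _ C2_subset] by simp_all
    then show ?thesis by blast
  next
    case False
    then have "\<not> f ` C1 \<subseteq> C1" using a0 by blast
    then have f: "f ` C1 \<subseteq> C2" "f ` C2 \<subseteq> C1" using f_into by blast+
    moreover have "\<not> f' ` C2 \<subseteq> C2" using f(1) a0 a0' C1_C2_disjoint by force
    then have "f' ` C1 \<subseteq> C2" "f' ` C2 \<subseteq> C1" using f'_into by blast+
    ultimately have "f ` C1 = C2" "f ` C2 = C1"
      using onto[OF _ _ C1_subset] onto[OF _ _ C2_subset] by simp_all
    then show ?thesis by blast
  qed
qed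

end

section \<open>Subgroups of index at most two\<close>

lemma stabilizer_of_swapped_pair_index_le_two:
  fixes G :: "('a \<Rightarrow> 'a) set" and act :: "('a \<Rightarrow> 'a) \<Rightarrow> 'b \<Rightarrow> 'b"
  assumes G: "id \<in> G" "\<And>g h. g \<in> G \<Longrightarrow> h \<in> G \<Longrightarrow> g \<circ> h \<in> G" "\<And>g. g \<in> G \<Longrightarrow> inv g \<in> G"
      "\<And>g. g \<in> G \<Longrightarrow> bij g"
    and act_comp: "\<And>g h x. act (g \<circ> h) x = act g (act h x)" and act_id: "\<And>x. act id x = x"
    and perm: "\<And>g. g \<in> G \<Longrightarrow> (act g ` A = A \<and> act g ` B = B) \<or> (act g ` A = B \<and> act g ` B = A)"
  shows "\<exists>H. is_subgroup H G \<and> (H = G \<or> (\<exists>h\<in>G - H. G = H \<union> (\<lambda>k. h \<circ> k) ` H)) \<and>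
           (\<forall>g\<in>H. act g ` A = A \<and> act g ` B = B)"
proof -
  define H where "H = {g \<in> G. act g ` A = A \<and> act g ` B = B}"
  have act_image_comp: "act (g \<circ> h) ` S = act g ` act h ` S" for g h S
    by (simp add: act_comp image_image)
  have act_inv: "act (inv g) ` act g ` S = S" if "g \<in> G" for g S
    using bij_is_inj[OF G(4)[OF that]] by (simp add: act_image_comp[symmetric] act_id)
  have HG: "H \<subseteq> G" and stab: "\<forall>g\<in>H. act g ` A = A \<and> act g ` B = B" unfolding H_def by auto
  have "is_subgroup H G"
    unfolding is_subgroup_def
  proof (intro conjI ballI)
    show "H \<subseteq> G" by (rule HG)
    show "id \<in> H" unfolding H_def using G(1) by (simp add: act_id)
    show "g \<circ> h \<in> H" if "g \<in> H" "h \<in> H" for g h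
      using that G(2) unfolding H_def by (simp add: act_image_comp)
    show "inv g \<in> H" if "g \<in> H" for g
      using that act_inv[of g A] act_inv[of g B] G(3) unfolding H_def by simp
  qed
  moreover have "H = G \<or> (\<exists>h\<in>G - H. G = H \<union> (\<lambda>k. h \<circ> k) ` H)"
  proof (cases "H = G")
    case False
    then obtain h where h: "h \<in> G" "h \<notin> H" unfolding H_def by blast
    then have "\<not> (act h ` A = A \<and> act h ` B = B)" unfolding H_def by blast
    then have swap_h: "act h ` A = B" "act h ` B = A" using perm[OF h(1)] by blast+
    have "k \<in> H \<union> (\<lambda>k. h \<circ> k) ` H" if k: "k \<in> G" "k \<notin> H" for k
    proof -
      have "\<not> (act k ` A = A \<and> act k ` B = B)" using k unfolding H_def by blast
      then have "act k ` A = B" "act k ` B = A" using perm[OF k(1)] by blast+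
      then have "inv h \<circ> k \<in> H"
        using act_inv[OF h(1), of A] act_inv[OF h(1), of B] swap_h G(2,3) h(1) k(1)
        unfolding H_def by (simp add: act_image_comp)
      moreover have "h \<circ> (inv h \<circ> k) = k"
        using bij_is_surj[OF G(4)[OF h(1)]] by (simp add: fun_eq_iff surj_f_inv_f)
      ultimately show ?thesis by (metis UnI2 image_eqI)
    qed
    then have "G \<subseteq> H \<union> (\<lambda>k. h \<circ> k) ` H" by blast
    moreover have "(\<lambda>k. h \<circ> k) ` H \<subseteq> G" using G(2) h(1) HG by blast
    ultimately have "G = H \<union> (\<lambda>k. h \<circ> k) ` H" using HG by blast
    then show ?thesis using h by blast
  qed simp
  ultimately show ?thesis using stab by blast
qed

section \<open>Isometries of a CAT(0) space with boundary \<open>C1 * C2\<close>\<close>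

lemma cantor_join_if_join_of:
  assumes "join_of T C1 C2" "is_cantor_subspace T C1" "is_cantor_subspace T C2"
  obtains q where "cantor_join T C1 C2 q"
proof -
  obtain q where q: "quotient_map (prod_topology (subtopology T C1)
               (prod_topology (subtopology T C2) (top_of_set {0..1::real}))) T q"
    "\<forall>a\<in>C1. \<forall>b\<in>C2. q (a, b, 0) = a \<and> q (a, b, 1) = b"
    "\<forall>a\<in>C1. \<forall>b\<in>C2. \<forall>t\<in>{0..1}. \<forall>a'\<in>C1. \<forall>b'\<in>C2. \<forall>t'\<in>{0..1}.
       q (a, b, t) = q (a', b', t') \<longleftrightarrow> (t = t' \<and> ((0 < t \<and> t < 1 \<and> a = a' \<and> b = b') \<or>
         (t = 0 \<and> a = a') \<or> (t = 1 \<and> b = b')))"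
    using assms(1) unfolding join_of_def by (elim conjE exE) (rule that)
  have "cantor_join T C1 C2 q"
  proof (rule cantor_join.intro[OF assms(2,3) q(1)])
    show "q (a, b, 0) = a \<and> q (a, b, 1) = b" if "a \<in> C1" "b \<in> C2" for a b
      using q(2) that by blast
    show "q (a, b, t) = q (a', b', t') \<longleftrightarrow> (t = t' \<and> ((0 < t \<and> t < 1 \<and> a = a' \<and> b = b') \<or>
         (t = 0 \<and> a = a') \<or> (t = 1 \<and> b = b')))"
      if "a \<in> C1" "b \<in> C2" "t \<in> {0..1}" "a' \<in> C1" "b' \<in> C2" "t' \<in> {0..1}" for a b t a' b' t'
      using q(3)[rule_format, OF that] .
  qed
  then show thesis by (rule that)
qed

theorem lemma2p1:
  fixes G :: "('a::metric_space \<Rightarrow> 'a) set"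
    and x0 :: 'a
    and C1 C2 :: "(real \<Rightarrow> 'a) set set"
  assumes "proper_metric_space TYPE('a)"
    and "complete (UNIV :: 'a set)"
    and "CAT0_space TYPE('a)"
    and "is_cantor_subspace (cone_topology x0) C1"
    and "is_cantor_subspace (cone_topology x0) C2"
    and "join_of (cone_topology x0) C1 C2"
    and "isometry_group G"
    and "geometric_action G"
  shows "\<exists>H. is_subgroup H G \<and>
           (H = G \<or> (\<exists>h\<in>G - H. G = H \<union> (\<lambda>k. h \<circ> k) ` H)) \<and>
           (\<forall>g\<in>H. boundary_map g ` C1 = C1 \<and> boundary_map g ` C2 = C2)"
proof (rule stabilizer_of_swapped_pair_index_le_two)
  obtain q where join: "cantor_join (cone_topology x0) C1 C2 q"
    using cantor_join_if_join_of[OF assms(6,4,5)] .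
  have isometries: "\<And>g. g \<in> G \<Longrightarrow> isometry g" using assms(7) unfolding isometry_group_def by blast
  show "(boundary_map g ` C1 = C1 \<and> boundary_map g ` C2 = C2) \<or>
        (boundary_map g ` C1 = C2 \<and> boundary_map g ` C2 = C1)" if "g \<in> G" for g
    using cantor_join.homeomorphic_maps_preserve_or_swap_cones[OF join
        CAT0_homeomorphic_maps_boundary_map[OF assms(3,2) isometries[OF that]]] .
  show "bij g" if "g \<in> G" for g using isometry_bij[OF isometries[OF that]] .
qed (use assms(7) in \<open>simp_all add: isometry_group_def boundary_map_comp boundary_map_id\<close>)

end
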